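(* Let $f=(f_1,f_2):\mathbb{R}^2\to\mathbb{R}^2$ be a polynomial mapping, with $J$, $F_1$, $F_2$ as in the context, and let $I'$ be the ideal of $\mathbb{R}[x,y]$ generated by $J,F_1,F_2,\frac{\partial(J,F_1)}{\partial(x,y)},\frac{\partial(J,F_2)}{\partial(x,y)}$. If $I'=\mathbb{R}[x,y]$, then $f$ is one-generic and every critical point of $f$ is either a fold point or a cusp point. Moreover the set $\Sigma$ of cusp points equals $\{p: J(p)=0,F_1(p)=0,F_2(p)=0\}$ and is finite.
   Context: $J=\det Df$, and $F_i=\frac{\partial J}{\partial x}\frac{\partial f_i}{\partial y}-\frac{\partial J}{\partial y}\frac{\partial f_i}{\partial x}$ for $i=1,2$; $\frac{\partial(g,h)}{\partial(x,y)}=\frac{\partial g}{\partial x}\frac{\partial h}{\partial y}-\frac{\partial g}{\partial y}\frac{\partial h}{\partial x}$. For a smooth $f:\mathbb{R}^2\to\mathbb{R}^2$, let $S_r(f)=\{p:\operatorname{corank}Df(p)=r\}$ with $\operatorname{corank}=2-\operatorname{rank}$, and $S_r\subset J^1(\mathbb{R}^2,\mathbb{R}^2)$ the set of 1-jets of corank $r$; $f$ is one-generic if $j^1f$ is transverse to $S_r$ for all $r$. For one-generic $f$, a point $p\in S_1(f)$ is a fold point if $T_pS_1(f)+\ker Df(p)=\mathbb{R}^2$; if instead $T_pS_1(f)=\ker Df(p)$, take a smooth $k$ near $p$ vanishing on $S_1(f)$ with $dk(p)\ne0$ and a nonvanishing vector field $\xi$ along $S_1(f)$ with $\xi\in\ker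 Df$; $p$ is a (simple) cusp point if $p$ is a simple zero of the function $dk(\xi)$ on $S_1(f)$ (this is independent of choices). *)

theory Defs
  imports "HOL-Analysis.Analysis"
begin

type_synonym pt = "real \<times> real"
type_synonym jet1 = "pt \<times> pt \<times> (pt \<Rightarrow>\<^sub>L pt)"

definition poly2 :: "(pt \<Rightarrow> real) \<Rightarrow> bool" where
  "poly2 g \<longleftrightarrow> (\<exists>n c. \<forall>x y. g (x, y) = (\<Sum>i\<le>n. \<Sum>j\<le>n. c i j * x ^ i * y ^ j))"

definition px :: "(pt \<Rightarrow> real) \<Rightarrow> pt \<Rightarrow> real" where
  "px g p = deriv (\<lambda>t. g (t, snd p)) (fst p)"

definition py :: "(pt \<Rightarrow> real) \<Rightarrow> pt \<Rightarrow> real" where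
  "py g p = deriv (\<lambda>t. g (fst p, t)) (snd p)"

definition jac :: "(pt \<Rightarrow> real) \<Rightarrow> (pt \<Rightarrow> real) \<Rightarrow> pt \<Rightarrow> real" where
  "jac g h p = px g p * py h p - py g p * px h p"

definition comp1 :: "(pt \<Rightarrow> pt) \<Rightarrow> pt \<Rightarrow> real" where
  "comp1 f p = fst (f p)"
definition comp2 :: "(pt \<Rightarrow> pt) \<Rightarrow> pt \<Rightarrow> real" where
  "comp2 f p = snd (f p)"

definition Jdet :: "(pt \<Rightarrow> pt) \<Rightarrow> pt \<Rightarrow> real" where
  "Jdet f = jac (comp1 f) (comp2 f)"

definition Fi :: "(pt \<Rightarrow> pt) \<Rightarrow> (pt \<Rightarrow> real) \<Rightarrow> pt \<Rightarrow> real" where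
  "Fi f fi = jac (Jdet f) fi"

definition F1 :: "(pt \<Rightarrow> pt) \<Rightarrow> pt \<Rightarrow> real" where
  "F1 f = Fi f (comp1 f)"
definition F2 :: "(pt \<Rightarrow> pt) \<Rightarrow> pt \<Rightarrow> real" where
  "F2 f = Fi f (comp2 f)"

definition Df :: "(pt \<Rightarrow> pt) \<Rightarrow> pt \<Rightarrow> pt \<Rightarrow> pt" where
  "Df f p = frechet_derivative f (at p)"

definition corank :: "(pt \<Rightarrow> pt) \<Rightarrow> pt \<Rightarrow> nat" where
  "corank f p = 2 - dim (range (Df f p))"

definition kerDf :: "(pt \<Rightarrow> pt) \<Rightarrow> pt \<Rightarrow> pt set" where
  "kerDf f p = {v. Df f p v = 0}"

definition Sr :: "(pt \<Rightarrow> pt) \<Rightarrow> nat \<Rightarrow> pt set" where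
  "Sr f r = {p. corank f p = r}"

definition tangent_set :: "'a::real_normed_vector set \<Rightarrow> 'a \<Rightarrow> 'a set" where
  "tangent_set S q = {v. \<exists>\<gamma> e. e > 0 \<and> \<gamma> 0 = q \<and> (\<forall>t\<in>ball 0 e. \<gamma> t \<in> S)
                        \<and> (\<gamma> has_vector_derivative v) (at 0)}"

definition setsum :: "'a::real_normed_vector set \<Rightarrow> 'a set \<Rightarrow> 'a set" where
  "setsum A B = {a + b | a b. a \<in> A \<and> b \<in> B}"

definition transversal :: "('a::real_normed_vector \<Rightarrow> 'b::real_normed_vector) \<Rightarrow> 'b set \<Rightarrow> bool" where
  "transversal g S \<longleftrightarrow> (\<forall>p. g p \<in> S \<longrightarrow>
      (\<exists>D. (g has_derivative D) (at p) \<and> setsum (range D) (tangent_set S (g p)) = UNIV))"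

definition jet1 :: "(pt \<Rightarrow> pt) \<Rightarrow> pt \<Rightarrow> jet1" where
  "jet1 f p = (p, f p, Blinfun (Df f p))"

definition Sjet :: "nat \<Rightarrow> jet1 set" where
  "Sjet r = {(p, q, L). 2 - dim (range (blinfun_apply L)) = r}"

definition one_generic :: "(pt \<Rightarrow> pt) \<Rightarrow> bool" where
  "one_generic f \<longleftrightarrow> (\<forall>r. transversal (jet1 f) (Sjet r))"

definition fold_point :: "(pt \<Rightarrow> pt) \<Rightarrow> pt \<Rightarrow> bool" where
  "fold_point f p \<longleftrightarrow> p \<in> Sr f 1 \<and> setsum (tangent_set (Sr f 1) p) (kerDf f p) = UNIV"

definition cusp_point :: "(pt \<Rightarrow> pt) \<Rightarrow> pt \<Rightarrow> bool" where
  "cusp_point f p \<longleftrightarrow> p \<in> Sr f 1 \<and> tangent_set (Sr f 1) p = kerDf f p \<and>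
     (\<exists>U k dk \<xi> \<gamma> \<gamma>' e. open U \<and> p \<in> U \<and> e > 0 \<and>
        (\<forall>q\<in>U. (k has_derivative blinfun_apply (dk q)) (at q)) \<and> continuous_on U dk \<and>
        (\<forall>q\<in>U \<inter> Sr f 1. k q = 0) \<and> dk p \<noteq> 0 \<and>
        continuous_on (U \<inter> Sr f 1) \<xi> \<and>
        (\<forall>q\<in>U \<inter> Sr f 1. \<xi> q \<noteq> 0 \<and> Df f q (\<xi> q) = 0) \<and>
        \<gamma> 0 = p \<and> inj_on \<gamma> (ball 0 e) \<and> \<gamma> ` ball 0 e = U \<inter> Sr f 1 \<and>
        (\<forall>t\<in>ball 0 e. (\<gamma> has_vector_derivative \<gamma>' t) (at t) \<and> \<gamma>' t \<noteq> 0) \<and>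
        continuous_on (ball 0 e) \<gamma>' \<and>
        (let h = (\<lambda>t. blinfun_apply (dk (\<gamma> t)) (\<xi> (\<gamma> t))) in
           h 0 = 0 \<and> (\<exists>c. c \<noteq> 0 \<and> (h has_real_derivative c) (at 0))))"

end

theory Submission
  imports Defs "HOL-Computational_Algebra.Polynomial_Factorial"
begin

text \<open>Writing \<open>J\<close>, \<open>F\<^sub>1\<close>, \<open>F\<^sub>2\<close> as polynomials, the hypothesis \<open>I' = \<real>[x,y]\<close> is only used through
  its pointwise consequence: \<open>J\<close>, \<open>F\<^sub>1\<close>, \<open>F\<^sub>2\<close>, \<open>\<partial>(J,F\<^sub>1)/\<partial>(x,y)\<close>, \<open>\<partial>(J,F\<^sub>2)/\<partial>(x,y)\<close> have no
  common real zero. Since \<open>F\<^sub>i = J\<^sub>x (f\<^sub>i)\<^sub>y - J\<^sub>y (f\<^sub>i)\<^sub>x\<close>, this forces \<open>\<nabla>J \<noteq> 0\<close> on \<open>{J = 0}\<close> and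
  \<open>Df \<noteq> 0\<close> everywhere. So \<open>S\<^sub>1(f) = {J = 0}\<close> is a regular curve (inverse function theorem),
  there are no corank-two points, and one-genericity follows because \<open>dJ\<close> is the derivative
  of the determinant along the 1-jet of \<open>f\<close>.

  On \<open>S\<^sub>1(f)\<close> the rows of \<open>Df\<close>, rotated by a right angle, lie in \<open>ker Df\<close>, and pairing them
  with \<open>dJ\<close> gives \<open>F\<^sub>1\<close> and \<open>F\<^sub>2\<close>. Hence \<open>ker Df\<close> is transverse to the tangent line of
  \<open>S\<^sub>1(f)\<close> (a fold) exactly when \<open>F\<^sub>1\<close> or \<open>F\<^sub>2\<close> is nonzero. Where \<open>J = F\<^sub>1 = F\<^sub>2 = 0\<close>,
  \<open>dJ(\<xi>)\<close> for a suitable kernel field \<open>\<xi>\<close> is a combination \<open>\<alpha> F\<^sub>1 + \<beta> F\<^sub>2\<close>, whose derivative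
  along \<open>S\<^sub>1(f)\<close> is a nonzero multiple of \<open>\<alpha> \<partial>(J,F\<^sub>1)/\<partial>(x,y) + \<beta> \<partial>(J,F\<^sub>2)/\<partial>(x,y)\<close>: a cusp.

  Finiteness: if \<open>A = B = 0\<close> and \<open>\<partial>(A,B)/\<partial>(x,y) \<noteq> 0\<close> at \<open>(x,y)\<close>, then a Bezout identity in
  \<open>\<real>(x)[y]\<close> shows that, unless \<open>x\<close> is one of finitely many roots of the cleared
  denominators, the common factor \<open>G\<close> of \<open>A\<close> and \<open>B\<close> vanishes at \<open>(x,y)\<close>, which would force
  \<open>\<partial>(A,B)/\<partial>(x,y) = 0\<close>. By symmetry \<open>y\<close> also takes finitely many values.\<close>

section \<open>Linear maps of the plane\<close>

definition lin22 :: "real \<Rightarrow> real \<Rightarrow> real \<Rightarrow> real \<Rightarrow> pt \<Rightarrow> pt" where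
  "lin22 a b c d v = (a * fst v + b * snd v, c * fst v + d * snd v)"

lemma linear_lin22: "linear (lin22 a b c d)"
  by (rule linearI) (auto simp: lin22_def algebra_simps)

lemma bounded_linear_lin22: "bounded_linear (lin22 a b c d)"
  using linear_lin22 linear_conv_bounded_linear by blast

lemma lin22_scaleR: "lin22 a b c d (s *\<^sub>R v) = s *\<^sub>R lin22 a b c d v"
  by (rule linear_scale[OF linear_lin22])

lemma lin22_eq_iff:
  assumes "a * d - b * c \<noteq> 0"
  shows "lin22 a b c d v = w \<longleftrightarrow>
    v = ((d * fst w - b * snd w) / (a * d - b * c), (a * snd w - c * fst w) / (a * d - b * c))"
proof -
  have cramer: "d * fst (lin22 a b c d u) - b * snd (lin22 a b c d u) = (a * d - b * c) * fst u"
    "a * snd (lin22 a b c d u) - c * fst (lin22 a b c d u) = (a * d - b * c) * snd u" for u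
    by (simp_all add: lin22_def algebra_simps)
  show ?thesis
  proof
    assume "lin22 a b c d v = w"
    then show "v = ((d * fst w - b * snd w) / (a * d - b * c), (a * snd w - c * fst w) / (a * d - b * c))"
      using cramer[of v] assms by (simp add: prod_eq_iff)
  next
    assume "v = ((d * fst w - b * snd w) / (a * d - b * c), (a * snd w - c * fst w) / (a * d - b * c))"
    then have v: "fst v = (d * fst w - b * snd w) / (a * d - b * c)"
      "snd v = (a * snd w - c * fst w) / (a * d - b * c)" by simp_all
    have frac: "a' * (X / D) + b' * (Y / D) = z" if "a' * X + b' * Y = D * z" "D \<noteq> 0"
      for a' b' X Y D z :: real
      using that by (simp add: field_simps)
    show "lin22 a b c d v = w"
      unfolding lin22_def prod_eq_iff fst_conv snd_conv v
      by (intro conjI frac) (use assms in \<open>simp_all add: algebra_simps\<close>)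
  qed
qed

lemma range_lin22: "range (lin22 a b c d) = span {(a, c), (b, d)}"
  by (auto simp: lin22_def span_insert span_singleton image_iff prod_eq_iff algebra_simps) blast+

lemma in_span_singleton_iff_det:
  assumes "(b, d) \<noteq> (0::pt)"
  shows "(a, c) \<in> span {(b, d)} \<longleftrightarrow> a * d - b * c = 0"
proof
  assume "(a, c) \<in> span {(b, d)}"
  then show "a * d - b * c = 0" by (auto simp: span_singleton)
next
  assume det: "a * d - b * c = 0"
  have nn: "b * b + d * d \<noteq> 0" using assms by (auto simp: add_nonneg_eq_0_iff zero_prod_def)
  have "(a, c) = ((a * b + c * d) / (b * b + d * d)) *\<^sub>R (b, d)"
    using nn det by (simp add: field_simps)
  then show "(a, c) \<in> span {(b, d)}"
    by (metis span_base span_scale singletonI)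
qed

lemma dim_range_lin22:
  "dim (range (lin22 a b c d)) =
    (if a * d - b * c \<noteq> 0 then 2 else if a = 0 \<and> b = 0 \<and> c = 0 \<and> d = 0 then 0 else 1)"
proof (cases "(b, d) = (0::pt)")
  case True
  then show ?thesis
    by (simp add: range_lin22 dim_insert span_singleton zero_prod_def)
next
  case False
  then show ?thesis
    by (auto simp: range_lin22 dim_insert in_span_singleton_iff_det zero_prod_def)
qed

definition mk22 :: "real \<Rightarrow> real \<Rightarrow> real \<Rightarrow> real \<Rightarrow> pt \<Rightarrow>\<^sub>L pt" where
  "mk22 a b c d = Blinfun (lin22 a b c d)"

lemma blinfun_apply_mk22 [simp]: "blinfun_apply (mk22 a b c d) = lin22 a b c d"
  unfolding mk22_def using bounded_linear_lin22 by (rule bounded_linear_Blinfun_apply)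

lemma mk22_decomp:
  "mk22 a b c d = a *\<^sub>R mk22 1 0 0 0 + b *\<^sub>R mk22 0 1 0 0 + c *\<^sub>R mk22 0 0 1 0 + d *\<^sub>R mk22 0 0 0 1"
  by (rule blinfun_eqI) (simp add: lin22_def blinfun.add_left blinfun.scaleR_left)

lemma continuous_on_mk22 [continuous_intros]:
  assumes "continuous_on S a" "continuous_on S b" "continuous_on S c" "continuous_on S d"
  shows "continuous_on S (\<lambda>x. mk22 (a x) (b x) (c x) (d x))"
  by (subst mk22_decomp) (intro continuous_intros assms)

lemma mk22_inverse:
  assumes "a * d - b * c \<noteq> 0"
  shows "mk22 (d / (a * d - b * c)) (- b / (a * d - b * c)) (- c / (a * d - b * c))
      (a / (a * d - b * c)) o\<^sub>L mk22 a b c d = id_blinfun"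
proof (rule blinfun_eqI)
  fix v :: pt
  have "(d * (a * fst v + b * snd v) - b * (c * fst v + d * snd v)) / (a * d - b * c) = fst v"
    "(a * (c * fst v + d * snd v) - c * (a * fst v + b * snd v)) / (a * d - b * c) = snd v"
    using assms by (simp_all add: field_simps)
  then show "blinfun_apply (mk22 (d / (a * d - b * c)) (- b / (a * d - b * c))
      (- c / (a * d - b * c)) (a / (a * d - b * c)) o\<^sub>L mk22 a b c d) v = blinfun_apply id_blinfun v"
    by (simp add: lin22_def prod_eq_iff diff_divide_distrib add_divide_distrib)
qed

lemma orthogonal_vector_2:
  fixes A B :: real
  assumes "A * fst v + B * snd v = 0" "(A, B) \<noteq> (0, 0)"
  obtains s where "v = s *\<^sub>R (- B, A)"
proof
  have "A * A + B * B \<noteq> 0" using assms(2) sum_squares_eq_zero_iff[of A B] by auto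
  moreover have "A * (A * fst v) + A * (B * snd v) = A * (A * fst v + B * snd v)"
    "A * (B * fst v) + B * (B * snd v) = B * (A * fst v + B * snd v)"
    by (simp_all add: algebra_simps)
  ultimately show "v = ((A * snd v - B * fst v) / (A * A + B * B)) *\<^sub>R (- B, A)"
    using assms(1) by (simp add: prod_eq_iff field_simps)
qed

lemma setsum_line_transversal:
  fixes A B :: real
  assumes "A * fst \<eta> + B * snd \<eta> \<noteq> 0" "\<And>s. s *\<^sub>R \<eta> \<in> K"
  shows "setsum {v. A * fst v + B * snd v = 0} K = UNIV"
proof (intro set_eqI iffI UNIV_I)
  fix w :: pt
  define s where "s = (A * fst w + B * snd w) / (A * fst \<eta> + B * snd \<eta>)"
  have "w - s *\<^sub>R \<eta> \<in> {v. A * fst v + B * snd v = 0}"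
    using assms(1) by (simp add: s_def field_simps)
  then show "w \<in> setsum {v. A * fst v + B * snd v = 0} K"
    unfolding setsum_def using assms(2)[of s]
    by (intro CollectI exI[of _ "w - s *\<^sub>R \<eta>"] exI[of _ "s *\<^sub>R \<eta>"]) simp
qed

lemma exists_combination_nonzero:
  fixes A B a b c d :: real
  assumes "A \<noteq> 0 \<or> B \<noteq> 0" "\<not> (a = 0 \<and> b = 0 \<and> c = 0 \<and> d = 0)"
  obtains \<alpha> \<beta> where "\<alpha> * A + \<beta> * B \<noteq> 0" "(\<alpha> * b + \<beta> * d, - (\<alpha> * a + \<beta> * c)) \<noteq> (0, 0)"
proof -
  have "(A \<noteq> 0 \<and> (b \<noteq> 0 \<or> a \<noteq> 0)) \<or> (B \<noteq> 0 \<and> (d \<noteq> 0 \<or> c \<noteq> 0))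
      \<or> (A + B \<noteq> 0 \<and> (b + d \<noteq> 0 \<or> a + c \<noteq> 0))"
    using assms by auto
  then show ?thesis
  proof (elim disjE)
    assume "A \<noteq> 0 \<and> (b \<noteq> 0 \<or> a \<noteq> 0)" then show ?thesis using that[of 1 0] by auto
  next
    assume "B \<noteq> 0 \<and> (d \<noteq> 0 \<or> c \<noteq> 0)" then show ?thesis using that[of 0 1] by auto
  next
    assume "A + B \<noteq> 0 \<and> (b + d \<noteq> 0 \<or> a + c \<noteq> 0)" then show ?thesis using that[of 1 1] by auto
  qed
qed

lemma orthogonal_vectors_collinear_2:
  fixes A B :: real
  assumes "(A, B) \<noteq> (0, 0)" "A * fst v + B * snd v = 0" "A * fst w + B * snd w = 0" "w \<noteq> 0"
  obtains s where "v = s *\<^sub>R w"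
proof -
  obtain s where s: "v = s *\<^sub>R (- B, A)" using orthogonal_vector_2[OF assms(2,1)] .
  obtain s' where s': "w = s' *\<^sub>R (- B, A)" using orthogonal_vector_2[OF assms(3,1)] .
  have "s' \<noteq> 0" using s' assms(4) by (auto simp: zero_prod_def)
  then have "v = (s / s') *\<^sub>R w" by (simp add: s s')
  then show ?thesis by (rule that)
qed

definition covec2 :: "real \<Rightarrow> real \<Rightarrow> pt \<Rightarrow>\<^sub>L real" where
  "covec2 a b = Blinfun (\<lambda>v. a * fst v + b * snd v)"

lemma blinfun_apply_covec2 [simp]: "blinfun_apply (covec2 a b) = (\<lambda>v. a * fst v + b * snd v)"
  unfolding covec2_def
  by (intro bounded_linear_Blinfun_apply bounded_linear_add bounded_linear_mult_right
      bounded_linear_compose[OF bounded_linear_mult_right] bounded_linear_fst bounded_linear_snd)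

lemma continuous_on_covec2 [continuous_intros]:
  assumes "continuous_on S a" "continuous_on S b"
  shows "continuous_on S (\<lambda>x. covec2 (a x) (b x))"
proof -
  have "covec2 (a x) (b x) = a x *\<^sub>R covec2 1 0 + b x *\<^sub>R covec2 0 1" for x
    by (rule blinfun_eqI) (simp add: blinfun.add_left blinfun.scaleR_left)
  then show ?thesis by (simp only:) (intro continuous_intros assms)
qed

section \<open>Level sets of \<open>C\<^sup>1\<close> functions on the plane\<close>

lemma tangent_setI:
  assumes "e > 0" "\<gamma> 0 = q" "\<And>t. t \<in> ball 0 e \<Longrightarrow> \<gamma> t \<in> S" "(\<gamma> has_vector_derivative v) (at 0)"
  shows "v \<in> tangent_set S q"
  unfolding tangent_set_def using assms by blast

lemma nonzero_near_0:
  fixes f :: "real \<Rightarrow> real"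
  assumes "isCont f 0" "f 0 \<noteq> 0"
  shows "\<exists>e>0. \<forall>t\<in>ball 0 e. f t \<noteq> 0"
  using continuous_at_avoid[OF assms] by (auto simp: dist_commute)

lemma homeomorphism_vertical_segment:
  fixes \<Phi> :: "pt \<Rightarrow> pt"
  assumes hom: "homeomorphism U' V \<Phi> h" and r: "ball (0, c) r \<subseteq> V"
  shows "inj_on (\<lambda>t. h (0, c + t)) (ball 0 r)"
    and "(\<lambda>t. h (0, c + t)) ` ball 0 r = {q \<in> U' \<inter> \<Phi> -` ball (0, c) r. fst (\<Phi> q) = 0}"
    and "continuous_on (ball 0 r) (\<lambda>t. h (0, c + t))"
proof -
  have h: "\<And>x. x \<in> U' \<Longrightarrow> h (\<Phi> x) = x" "\<And>y. y \<in> V \<Longrightarrow> \<Phi> (h y) = y"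
    "\<And>y. y \<in> V \<Longrightarrow> h y \<in> U'" "continuous_on V h"
    using hom by (auto simp: homeomorphism_def)
  have ball: "(0, c + t) \<in> ball (0, c) r \<longleftrightarrow> t \<in> ball 0 r" for t :: real
    by (simp add: dist_Pair_Pair dist_real_def)
  have V: "(0, c + t) \<in> V" if "t \<in> ball 0 r" for t using that ball r by blast
  show "inj_on (\<lambda>t. h (0, c + t)) (ball 0 r)"
  proof (rule inj_onI)
    fix s t :: real assume st: "s \<in> ball 0 r" "t \<in> ball 0 r" "h (0, c + s) = h (0, c + t)"
    have "(0, c + s) = \<Phi> (h (0, c + s))" using h(2)[OF V[OF st(1)]] by simp
    also have "\<dots> = (0, c + t)" using h(2)[OF V[OF st(2)]] st(3) by simp
    finally show "s = t" by simp
  qed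
  show "(\<lambda>t. h (0, c + t)) ` ball 0 r = {q \<in> U' \<inter> \<Phi> -` ball (0, c) r. fst (\<Phi> q) = 0}"
  proof (intro set_eqI iffI)
    fix q assume "q \<in> (\<lambda>t. h (0, c + t)) ` ball 0 r"
    then obtain t where t: "t \<in> ball 0 r" "q = h (0, c + t)" by blast
    then have "(0, c + t) \<in> ball (0, c) r" using ball by blast
    then show "q \<in> {q \<in> U' \<inter> \<Phi> -` ball (0, c) r. fst (\<Phi> q) = 0}"
      using t(2) h(2,3) r by auto
  next
    fix q assume q: "q \<in> {q \<in> U' \<inter> \<Phi> -` ball (0, c) r. fst (\<Phi> q) = 0}"
    define t where "t = snd (\<Phi> q) - c"
    have "\<Phi> q = (0, c + t)" using q by (simp add: t_def prod_eq_iff)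
    then have "t \<in> ball 0 r" "q = h (0, c + t)" using q ball h(1)[of q] by auto
    then show "q \<in> (\<lambda>t. h (0, c + t)) ` ball 0 r" by (rule rev_image_eqI)
  qed
  show "continuous_on (ball 0 r) (\<lambda>t. h (0, c + t))"
    by (rule continuous_on_compose2[OF h(4)]) (use V in \<open>auto intro!: continuous_intros\<close>)
qed

lemma has_vector_derivative_vertical_segment:
  assumes "(h has_derivative h') (at (0, c + t))"
  shows "((\<lambda>t. h (0, c + t)) has_vector_derivative h' (0, 1)) (at t)"
proof -
  have "((\<lambda>t. (0, c + t)) has_derivative (\<lambda>s. s *\<^sub>R (0, 1))) (at t)"
    by (auto intro!: derivative_eq_intros)
  from has_derivative_compose[OF this assms]
  show ?thesis
    by (simp only: o_def linear_scale[OF has_derivative_linear[OF assms]] has_vector_derivative_def)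
qed

locale C1_plane_function =
  fixes g gx gy :: "pt \<Rightarrow> real"
  assumes has_derivative_g: "(g has_derivative (\<lambda>v. gx q * fst v + gy q * snd v)) (at q)"
    and continuous_gx: "continuous_on UNIV gx" and continuous_gy: "continuous_on UNIV gy"
begin

lemma chain_rule:
  assumes "(c has_vector_derivative v) (at t)"
  shows "((\<lambda>t. g (c t)) has_real_derivative gx (c t) * fst v + gy (c t) * snd v) (at t)"
proof -
  have "((\<lambda>t. g (c t)) has_derivative
      (\<lambda>h. gx (c t) * fst (h *\<^sub>R v) + gy (c t) * snd (h *\<^sub>R v))) (at t)"
    using has_derivative_compose[OF assms[unfolded has_vector_derivative_def] has_derivative_g]
    by (simp add: o_def)
  then show ?thesis
    unfolding has_field_derivative_def
    by (rule has_derivative_eq_rhs) (auto simp: fun_eq_iff algebra_simps)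
qed

text \<open>The inverse function theorem applied to \<open>\<Phi> q = (g q, \<langle>\<tau>, q\<rangle>)\<close>, where \<open>\<tau>\<close> is the
  gradient of \<open>g\<close> at \<open>p\<close> rotated by a right angle; the zero set of \<open>g\<close> is the preimage of a
  vertical line.\<close>
lemma level_set_straightening:
  assumes g0: "g p = 0" and grad: "(gx p, gy p) \<noteq> (0, 0)" and W: "open W" "p \<in> W"
  obtains U r \<gamma> \<gamma>' where "open U" "p \<in> U" "U \<subseteq> W" "r > 0" "\<gamma> 0 = p"
    "inj_on \<gamma> (ball 0 r)" "\<gamma> ` ball 0 r = U \<inter> {q. g q = 0}" "continuous_on (ball 0 r) \<gamma>"
    "\<And>t. t \<in> ball 0 r \<Longrightarrow> (\<gamma> has_vector_derivative \<gamma>' t) (at t)"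
    "\<And>t. t \<in> ball 0 r \<Longrightarrow> lin22 (gx (\<gamma> t)) (gy (\<gamma> t)) (- gy p) (gx p) (\<gamma>' t) = (0, 1)"
proof -
  define \<Phi> where "\<Phi> q = (g q, - gy p * fst q + gx p * snd q)" for q
  define \<Phi>' where "\<Phi>' q = mk22 (gx q) (gy q) (- gy p) (gx p)" for q
  have der: "(\<Phi> has_derivative blinfun_apply (\<Phi>' q)) (at q)" for q
    unfolding \<Phi>_def \<Phi>'_def blinfun_apply_mk22 lin22_def[abs_def]
    by (intro has_derivative_Pair has_derivative_g has_derivative_add
        has_derivative_mult_right has_derivative_fst has_derivative_snd has_derivative_ident)
  have cont: "continuous_on W \<Phi>'"
    unfolding \<Phi>'_def
    by (intro continuous_intros continuous_on_subset[OF continuous_gx]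
        continuous_on_subset[OF continuous_gy]) auto
  have "gx p * gx p - gy p * - gy p \<noteq> 0"
    using grad by (auto simp: add_nonneg_eq_0_iff)
  from mk22_inverse[OF this] obtain inv\<Phi>' where inv: "inv\<Phi>' o\<^sub>L \<Phi>' p = id_blinfun"
    unfolding \<Phi>'_def by blast
  obtain U' V h h' where U': "open U'" "U' \<subseteq> W" "p \<in> U'" and V: "open V" "\<Phi> p \<in> V"
    and hom: "homeomorphism U' V \<Phi> h"
    and h': "\<And>y. y \<in> V \<Longrightarrow> (h has_derivative (h' y)) (at y)"
    "\<And>y. y \<in> V \<Longrightarrow> h' y = inv (blinfun_apply (\<Phi>' (h y)))"
    "\<And>y. y \<in> V \<Longrightarrow> bij (blinfun_apply (\<Phi>' (h y)))"
    by (rule inverse_function_theorem[OF W(1) der cont W(2) inv]) blast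
  obtain r where r: "r > 0" "ball (\<Phi> p) r \<subseteq> V" using V open_contains_ball by blast
  define c0 where "c0 = snd (\<Phi> p)"
  have \<Phi>p: "\<Phi> p = (0, c0)" using g0 by (simp add: \<Phi>_def c0_def)
  have lV: "(0, c0 + t) \<in> V" if "t \<in> ball 0 r" for t
    using that r(2) by (auto simp: \<Phi>p dist_Pair_Pair dist_real_def)
  note segment = homeomorphism_vertical_segment[OF hom r(2)[unfolded \<Phi>p]]
  define U where "U = U' \<inter> \<Phi> -` ball (\<Phi> p) r"
  define \<gamma> where "\<gamma> t = h (0, c0 + t)" for t
  define \<gamma>' where "\<gamma>' t = h' (0, c0 + t) (0, 1)" for t
  show ?thesis
  proof
    have "continuous_on U' \<Phi>" using hom by (simp add: homeomorphism_def)
    then have "open (\<Phi> -` ball (\<Phi> p) r \<inter> U')"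
      using continuous_on_open_vimage[OF U'(1)] open_ball by blast
    then show "open U" by (simp add: U_def Int_commute)
    show "p \<in> U" "U \<subseteq> W" "r > 0" using U' r by (auto simp: U_def)
    show "\<gamma> 0 = p" using homeomorphism_apply1[OF hom U'(3)] \<Phi>p by (simp add: \<gamma>_def)
    show "inj_on \<gamma> (ball 0 r)" using segment(1) by (simp add: \<gamma>_def[abs_def])
    have "fst (\<Phi> q) = g q" for q by (simp add: \<Phi>_def)
    then show "\<gamma> ` ball 0 r = U \<inter> {q. g q = 0}"
      using segment(2) unfolding U_def \<Phi>p by (auto simp: \<gamma>_def[abs_def])
    show "continuous_on (ball 0 r) \<gamma>" using segment(3) by (simp add: \<gamma>_def[abs_def])
    fix t :: real assume t: "t \<in> ball 0 r"
    show "(\<gamma> has_vector_derivative \<gamma>' t) (at t)"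
      unfolding \<gamma>_def[abs_def] \<gamma>'_def
      by (rule has_vector_derivative_vertical_segment[OF h'(1)[OF lV[OF t]]])
    show "lin22 (gx (\<gamma> t)) (gy (\<gamma> t)) (- gy p) (gx p) (\<gamma>' t) = (0, 1)"
      using h'(2,3)[OF lV[OF t]] by (simp add: \<gamma>'_def \<gamma>_def \<Phi>'_def bij_is_surj surj_f_inv_f)
  qed
qed

lemma level_set_local_parametrization:
  assumes g0: "g p = 0" and grad: "(gx p, gy p) \<noteq> (0, 0)" and W: "open W" "p \<in> W"
  obtains U r \<gamma> \<gamma>' where "open U" "p \<in> U" "U \<subseteq> W" "r > 0" "\<gamma> 0 = p"
    "inj_on \<gamma> (ball 0 r)" "\<gamma> ` ball 0 r = U \<inter> {q. g q = 0}"
    "\<And>t. t \<in> ball 0 r \<Longrightarrow> (\<gamma> has_vector_derivative \<gamma>' t) (at t)"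
    "\<And>t. t \<in> ball 0 r \<Longrightarrow> \<gamma>' t \<noteq> 0" "continuous_on (ball 0 r) \<gamma>'"
    "\<gamma>' 0 = (1 / ((gx p)\<^sup>2 + (gy p)\<^sup>2)) *\<^sub>R (- gy p, gx p)"
proof -
  define D where "D q = gx q * gx p - gy q * - gy p" for q
  have "continuous_on UNIV D"
    unfolding D_def[abs_def] by (intro continuous_intros continuous_gx continuous_gy)
  then have "open (W \<inter> {q. D q \<noteq> 0})"
    by (intro open_Int W(1) open_Collect_neq[OF _ continuous_on_const])
  moreover have "p \<in> W \<inter> {q. D q \<noteq> 0}" using grad W(2) by (auto simp: D_def add_nonneg_eq_0_iff)
  ultimately obtain U r \<gamma> \<gamma>' where U: "open U" "p \<in> U" "U \<subseteq> W \<inter> {q. D q \<noteq> 0}" and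
    r: "r > 0" and \<gamma>: "\<gamma> 0 = p" "inj_on \<gamma> (ball 0 r)" "\<gamma> ` ball 0 r = U \<inter> {q. g q = 0}"
    "continuous_on (ball 0 r) \<gamma>" and
    \<gamma>': "\<And>t. t \<in> ball 0 r \<Longrightarrow> (\<gamma> has_vector_derivative \<gamma>' t) (at t)"
    "\<And>t. t \<in> ball 0 r \<Longrightarrow> lin22 (gx (\<gamma> t)) (gy (\<gamma> t)) (- gy p) (gx p) (\<gamma>' t) = (0, 1)"
    by (rule level_set_straightening[OF g0 grad]) blast+
  have D\<gamma>: "D (\<gamma> t) \<noteq> 0" if "t \<in> ball 0 r" for t using \<gamma>(3) U(3) that by blast
  have \<gamma>'_eq: "\<gamma>' t = (1 / D (\<gamma> t)) *\<^sub>R (- gy (\<gamma> t), gx (\<gamma> t))" if "t \<in> ball 0 r" for t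
    using \<gamma>'(2)[OF that] D\<gamma>[OF that]
    by (subst (asm) lin22_eq_iff) (simp_all add: D_def)
  show ?thesis
  proof
    show "open U" "p \<in> U" "U \<subseteq> W" "r > 0" "\<gamma> 0 = p" "inj_on \<gamma> (ball 0 r)"
      "\<gamma> ` ball 0 r = U \<inter> {q. g q = 0}" using U r \<gamma> by auto
    show "(\<gamma> has_vector_derivative \<gamma>' t) (at t)" if "t \<in> ball 0 r" for t using \<gamma>'(1)[OF that] .
    show "\<gamma>' t \<noteq> 0" if "t \<in> ball 0 r" for t using \<gamma>'(2)[OF that] by (auto simp: lin22_def)
    have "continuous_on (ball 0 r) (\<lambda>t. (1 / D (\<gamma> t)) *\<^sub>R (- gy (\<gamma> t), gx (\<gamma> t)))"
      unfolding D_def using D\<gamma>[unfolded D_def]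
      by (intro continuous_intros continuous_on_compose2[OF continuous_gx \<gamma>(4)]
          continuous_on_compose2[OF continuous_gy \<gamma>(4)]) auto
    then show "continuous_on (ball 0 r) \<gamma>'" by (rule continuous_on_eq) (use \<gamma>'_eq in auto)
    show "\<gamma>' 0 = (1 / ((gx p)\<^sup>2 + (gy p)\<^sup>2)) *\<^sub>R (- gy p, gx p)"
      using \<gamma>'_eq[of 0] r \<gamma>(1) by (simp add: D_def power2_eq_square)
  qed
qed

lemma tangent_set_level_set:
  assumes g0: "g p = 0" and grad: "(gx p, gy p) \<noteq> (0, 0)"
  shows "tangent_set {q. g q = 0} p = {v. gx p * fst v + gy p * snd v = 0}"
proof (intro set_eqI iffI)
  fix v assume "v \<in> tangent_set {q. g q = 0} p"
  then obtain c e where c: "e > 0" "c 0 = p" "\<And>t. t \<in> ball 0 e \<Longrightarrow> g (c t) = 0"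
    "(c has_vector_derivative v) (at 0)" unfolding tangent_set_def by blast
  have "((\<lambda>t. g (c t)) has_real_derivative gx p * fst v + gy p * snd v) (at 0)"
    using chain_rule[OF c(4)] c(2) by simp
  moreover have "((\<lambda>t. g (c t)) has_real_derivative 0) (at 0)"
    by (rule has_field_derivative_transform_within_open[OF DERIV_const, of "ball 0 e"])
      (use c in auto)
  ultimately show "v \<in> {v. gx p * fst v + gy p * snd v = 0}" using DERIV_unique by auto
next
  fix v assume "v \<in> {v. gx p * fst v + gy p * snd v = 0}"
  then obtain s where s: "v = s *\<^sub>R (- gy p, gx p)"
    using orthogonal_vector_2[OF _ grad] by blast
  obtain U r \<gamma> \<gamma>' where "r > 0" "\<gamma> 0 = p" and \<gamma>: "\<gamma> ` ball 0 r = U \<inter> {q. g q = 0}"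
    "\<And>t. t \<in> ball 0 r \<Longrightarrow> (\<gamma> has_vector_derivative \<gamma>' t) (at t)"
    "\<gamma>' 0 = (1 / ((gx p)\<^sup>2 + (gy p)\<^sup>2)) *\<^sub>R (- gy p, gx p)"
    by (rule level_set_local_parametrization[OF g0 grad open_UNIV UNIV_I]) blast
  text \<open>Reparametrize \<open>\<gamma>\<close> linearly so that its velocity at \<open>0\<close> becomes \<open>v\<close>.\<close>
  define k where "k = s * ((gx p)\<^sup>2 + (gy p)\<^sup>2)"
  define e where "e = r / (\<bar>k\<bar> + 1)"
  have "e > 0" using \<open>r > 0\<close> by (simp add: e_def)
  have "k * t \<in> ball 0 r" if "t \<in> ball 0 e" for t
  proof -
    have "\<bar>k * t\<bar> \<le> (\<bar>k\<bar> + 1) * \<bar>t\<bar>" by (simp add: abs_mult mult_right_mono)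
    also have "\<dots> < r" using that \<open>r > 0\<close> by (simp add: e_def field_simps)
    finally show ?thesis by simp
  qed
  then have "(\<gamma> \<circ> (\<lambda>t. k * t)) t \<in> {q. g q = 0}" if "t \<in> ball 0 e" for t
    using that \<gamma>(1) by auto
  moreover have "((\<gamma> \<circ> (\<lambda>t. k * t)) has_vector_derivative k *\<^sub>R \<gamma>' 0) (at 0)"
    using \<gamma>(2)[of 0] \<open>r > 0\<close> by (intro vector_diff_chain_at) (auto intro!: derivative_eq_intros)
  moreover have "k *\<^sub>R \<gamma>' 0 = v"
    using grad by (simp add: \<gamma>(3) s k_def add_nonneg_eq_0_iff)
  ultimately show "v \<in> tangent_set {q. g q = 0} p"
    using \<open>e > 0\<close> \<open>\<gamma> 0 = p\<close> by (intro tangent_setI[of e "\<gamma> \<circ> (\<lambda>t. k * t)"]) auto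
qed

end

section \<open>Bivariate polynomials\<close>

text \<open>A bivariate polynomial is an element of \<open>\<real>[x][y]\<close>: the coefficients of the outer
  polynomial (in \<open>y\<close>) are polynomials in \<open>x\<close>.\<close>
definition poly_xy :: "real poly poly \<Rightarrow> pt \<Rightarrow> real" where
  "poly_xy P p = poly (poly P [:snd p:]) (fst p)"

definition pderiv_x :: "real poly poly \<Rightarrow> real poly poly" where
  "pderiv_x P = map_poly pderiv P"

definition pderiv_y :: "real poly poly \<Rightarrow> real poly poly" where
  "pderiv_y P = pderiv P"

definition pjac :: "real poly poly \<Rightarrow> real poly poly \<Rightarrow> real poly poly" where
  "pjac A B = pderiv_x A * pderiv_y B - pderiv_y A * pderiv_x B"

lemma poly_xy_simps [simp]:
  "poly_xy (P + Q) p = poly_xy P p + poly_xy Q p"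
  "poly_xy (P - Q) p = poly_xy P p - poly_xy Q p"
  "poly_xy (- P) p = - poly_xy P p"
  "poly_xy (P * Q) p = poly_xy P p * poly_xy Q p"
  "poly_xy (P ^ n) p = poly_xy P p ^ n"
  "poly_xy (smult u P) p = poly u (fst p) * poly_xy P p"
  "poly_xy 0 p = 0" "poly_xy 1 p = 1"
  "poly_xy [:u:] p = poly u (fst p)"
  "poly_xy [:[:0, 1:]:] p = fst p" "poly_xy [:0, 1:] p = snd p"
  by (simp_all add: poly_xy_def)

lemma poly_xy_pCons: "poly_xy (pCons u Q) p = poly u (fst p) + snd p * poly_xy Q p"
  by (simp add: poly_xy_def)

lemma poly_xy_sum: "poly_xy (sum F A) p = (\<Sum>a\<in>A. poly_xy (F a) p)"
  by (induction A rule: infinite_finite_induct) simp_all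

lemma pderiv_x_pCons: "pderiv_x (pCons u Q) = pCons (pderiv u) (pderiv_x Q)"
  by (simp add: pderiv_x_def map_poly_pCons)

lemma pderiv_x_diff: "pderiv_x (A - B) = pderiv_x A - pderiv_x B"
  by (rule poly_eqI) (simp add: pderiv_x_def coeff_map_poly pderiv_diff)

lemma pderiv_y_pCons: "pderiv_y (pCons u Q) = Q + pCons 0 (pderiv_y Q)"
  by (simp add: pderiv_y_def pderiv_pCons)

lemma pderiv_y_diff: "pderiv_y (A - B) = pderiv_y A - pderiv_y B"
  by (simp add: pderiv_y_def pderiv_diff)

lemma poly_xy_has_derivative:
  "(poly_xy P has_derivative
     (\<lambda>v. poly_xy (pderiv_x P) p * fst v + poly_xy (pderiv_y P) p * snd v)) (at p)"
proof (induction P)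
  case 0
  then show ?case by (simp add: pderiv_x_def pderiv_y_def)
next
  case (pCons u Q)
  have poly_fst: "((\<lambda>q::pt. poly u (fst q)) has_derivative
      (\<lambda>v. fst v * poly (pderiv u) (fst p))) (at p)"
    by (rule DERIV_compose_FDERIV[OF poly_DERIV has_derivative_fst[OF has_derivative_ident]])
  have "poly_xy (pCons u Q) = (\<lambda>q. poly u (fst q) + snd q * poly_xy Q q)"
    by (rule ext) (simp add: poly_xy_pCons)
  moreover have "((\<lambda>q. poly u (fst q) + snd q * poly_xy Q q) has_derivative
      (\<lambda>v. fst v * poly (pderiv u) (fst p) + (snd p * (poly_xy (pderiv_x Q) p * fst v
         + poly_xy (pderiv_y Q) p * snd v) + snd v * poly_xy Q p))) (at p)"
    by (intro has_derivative_add poly_fst has_derivative_mult pCons.IH has_derivative_snd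
        has_derivative_ident)
  ultimately show ?case
    by (auto elim!: has_derivative_eq_rhs
        simp: pderiv_x_pCons pderiv_y_pCons poly_xy_pCons algebra_simps)
qed

lemma continuous_on_poly_xy [continuous_intros]: "continuous_on S (poly_xy P)"
  using poly_xy_has_derivative has_derivative_continuous continuous_at_imp_continuous_on
  by blast

interpretation poly_xy: C1_plane_function "poly_xy P" "poly_xy (pderiv_x P)" "poly_xy (pderiv_y P)"
  for P
  by unfold_locales (intro poly_xy_has_derivative continuous_on_poly_xy)+

lemma poly_xy_DERIV_x:
  "((\<lambda>t. poly_xy P (t, y)) has_real_derivative poly_xy (pderiv_x P) (x, y)) (at x)"
  using poly_xy.chain_rule[of "\<lambda>t. (t, y)" "(1, 0)" x P]
  by (simp add: has_vector_derivative_def has_derivative_Pair has_derivative_ident)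

lemma poly_xy_DERIV_y:
  "((\<lambda>t. poly_xy P (x, t)) has_real_derivative poly_xy (pderiv_y P) (x, y)) (at y)"
  using poly_xy.chain_rule[of "\<lambda>t. (x, t)" "(0, 1)" y P]
  by (simp add: has_vector_derivative_def has_derivative_Pair has_derivative_ident)

lemma px_poly_xy: "px (poly_xy P) = poly_xy (pderiv_x P)"
  by (rule ext) (simp add: px_def DERIV_imp_deriv[OF poly_xy_DERIV_x])

lemma py_poly_xy: "py (poly_xy P) = poly_xy (pderiv_y P)"
  by (rule ext) (simp add: py_def DERIV_imp_deriv[OF poly_xy_DERIV_y])

lemma jac_poly_xy: "jac (poly_xy A) (poly_xy B) = poly_xy (pjac A B)"
  by (rule ext) (simp add: jac_def pjac_def px_poly_xy py_poly_xy)

lemma poly_xy_pderiv_x_mult: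
  "poly_xy (pderiv_x (A * B)) p =
     poly_xy (pderiv_x A) p * poly_xy B p + poly_xy A p * poly_xy (pderiv_x B) p"
proof -
  have "((\<lambda>t. poly_xy A (t, snd p) * poly_xy B (t, snd p)) has_real_derivative
      poly_xy A p * poly_xy (pderiv_x B) p + poly_xy (pderiv_x A) p * poly_xy B p) (at (fst p))"
    using DERIV_mult[OF poly_xy_DERIV_x[of A "snd p" "fst p"] poly_xy_DERIV_x[of B "snd p" "fst p"]]
    by (simp add: algebra_simps)
  moreover have "((\<lambda>t. poly_xy A (t, snd p) * poly_xy B (t, snd p)) has_real_derivative
      poly_xy (pderiv_x (A * B)) p) (at (fst p))"
    using poly_xy_DERIV_x[of "A * B" "snd p" "fst p"] by simp
  ultimately show ?thesis
    by (simp add: DERIV_unique add.commute)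
qed

lemma poly_xy_pderiv_y_mult:
  "poly_xy (pderiv_y (A * B)) p =
     poly_xy (pderiv_y A) p * poly_xy B p + poly_xy A p * poly_xy (pderiv_y B) p"
  by (simp add: pderiv_y_def pderiv_mult algebra_simps)

lemma poly_xy_pjac_mult_zeros:
  assumes "poly_xy H1 p = 0" "poly_xy H2 p = 0"
  shows "poly_xy (pjac (G1 * H1) (G2 * H2)) p =
           poly_xy G1 p * poly_xy G2 p * poly_xy (pjac H1 H2) p"
  using assms by (simp add: pjac_def poly_xy_pderiv_x_mult poly_xy_pderiv_y_mult algebra_simps)

lemma poly2_imp_poly_xy:
  assumes "poly2 g"
  obtains P where "g = poly_xy P"
proof -
  from assms obtain n c where g: "\<And>x y. g (x, y) = (\<Sum>i\<le>n. \<Sum>j\<le>n. c i j * x ^ i * y ^ j)"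
    unfolding poly2_def by blast
  have "g = poly_xy (\<Sum>i\<le>n. \<Sum>j\<le>n. [:[:c i j:]:] * [:[:0, 1:]:] ^ i * [:0, 1:] ^ j)"
    by (rule ext) (auto simp: g poly_xy_sum mult.assoc)
  then show ?thesis by (rule that)
qed

lemma poly_xy_swap: obtains Q where "\<And>x y. poly_xy Q (x, y) = poly_xy P (y, x)"
proof -
  have poly_const_coeffs: "poly (map_poly (\<lambda>a. [:a:]) c) [:y:] = [:poly c y:]" for c y
    by (induction c) (simp_all add: map_poly_pCons mult.commute)
  have "\<exists>Q. \<forall>x y. poly_xy Q (x, y) = poly_xy P (y, x)"
  proof (induction P)
    case (pCons u P)
    then obtain Q where Q: "\<forall>x y. poly_xy Q (x, y) = poly_xy P (y, x)" by blast
    show ?case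
      by (intro exI[of _ "map_poly (\<lambda>a. [:a:]) u + [:[:0, 1:]:] * Q"])
        (simp add: poly_xy_pCons Q, simp add: poly_xy_def poly_const_coeffs)
  qed (intro exI[of _ 0], simp)
  then show ?thesis using that by blast
qed

definition dpoly_xy :: "real poly poly \<Rightarrow> pt \<Rightarrow> pt \<Rightarrow> real" where
  "dpoly_xy Q p v = poly_xy (pderiv_x Q) p * fst v + poly_xy (pderiv_y Q) p * snd v"

lemma has_derivative_mk22_poly_xy:
  "((\<lambda>q. mk22 (poly_xy A q) (poly_xy B q) (poly_xy C q) (poly_xy D q)) has_derivative
     (\<lambda>v. mk22 (dpoly_xy A p v) (dpoly_xy B p v) (dpoly_xy C p v) (dpoly_xy D p v))) (at p)"
proof -
  have "((\<lambda>q. poly_xy A q *\<^sub>R mk22 1 0 0 0 + poly_xy B q *\<^sub>R mk22 0 1 0 0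
        + poly_xy C q *\<^sub>R mk22 0 0 1 0 + poly_xy D q *\<^sub>R mk22 0 0 0 1) has_derivative
      (\<lambda>v. dpoly_xy A p v *\<^sub>R mk22 1 0 0 0 + dpoly_xy B p v *\<^sub>R mk22 0 1 0 0
        + dpoly_xy C p v *\<^sub>R mk22 0 0 1 0 + dpoly_xy D p v *\<^sub>R mk22 0 0 0 1)) (at p)"
    unfolding dpoly_xy_def
    by (auto intro!: derivative_eq_intros poly_xy_has_derivative)
  then show ?thesis by (subst (1 2) mk22_decomp)
qed

section \<open>Finiteness of nondegenerate common zeros\<close>

lemma field_poly_bezout_cofactors:
  fixes a b :: "'a::field poly"
  assumes "a \<noteq> 0 \<or> b \<noteq> 0"
  obtains g s t a' b' where "g \<noteq> 0" "a = g * a'" "b = g * b'" "s * a' + t * b' = 1"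
proof -
  define I where "I = {s * a + t * b | s t. True}"
  have I_comb: "u * x + v * y \<in> I" if "x \<in> I" "y \<in> I" for u v x y
  proof -
    from that obtain s1 t1 s2 t2 where "x = s1 * a + t1 * b" "y = s2 * a + t2 * b"
      unfolding I_def by blast
    then have "u * x + v * y = (u * s1 + v * s2) * a + (u * t1 + v * t2) * b"
      by (simp add: algebra_simps)
    then show ?thesis unfolding I_def by blast
  qed
  have aI: "a \<in> I" and bI: "b \<in> I"
    unfolding I_def by (auto intro: exI[of _ 1] exI[of _ 0])
  text \<open>A nonzero element of least degree generates \<open>I\<close>.\<close>
  obtain g where g: "g \<in> I" "g \<noteq> 0" and least: "\<And>x. x \<in> I \<Longrightarrow> x \<noteq> 0 \<Longrightarrow> degree g \<le> degree x"
    using assms aI bI ex_has_least_nat[of "\<lambda>x. x \<in> I \<and> x \<noteq> 0" _ degree] by metis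
  have g_dvd: "g dvd x" if "x \<in> I" for x
  proof -
    have "1 * x + (- (x div g)) * g = x mod g"
      by (simp add: minus_div_mult_eq_mod[symmetric])
    then have "x mod g \<in> I" using I_comb[OF that g(1), of 1 "- (x div g)"] by simp
    then have "x mod g = 0" using least[of "x mod g"] degree_mod_less[of g x] g(2) by fastforce
    then show ?thesis by (simp add: mod_eq_0_iff_dvd)
  qed
  obtain a' b' where a': "a = g * a'" and b': "b = g * b'"
    using g_dvd[OF aI] g_dvd[OF bI] by (auto elim!: dvdE)
  obtain s t where "g = s * a + t * b" using g(1) unfolding I_def by blast
  then have "g * (s * a' + t * b') = g * 1" using a' b' by (simp add: algebra_simps)
  then show ?thesis using that g(2) a' b' by simp
qed

lemma fract_poly_clear_denominators:
  obtains c P where "c \<noteq> 0" "fract_poly P = smult (to_fract c) (q :: 'a::idom fract poly)"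
proof -
  have "\<exists>c P. c \<noteq> 0 \<and> fract_poly P = smult (to_fract c) q"
  proof (induction q)
    case (pCons u q)
    then obtain c P where cP: "c \<noteq> 0" "fract_poly P = smult (to_fract c) q" by blast
    obtain n d where u: "u = Fract n d" "d \<noteq> 0" by (cases u) auto
    have "to_fract (d * c) * u = to_fract (c * n)" using u by (simp add: to_fract_def eq_fract)
    then have "fract_poly (pCons (c * n) (smult d P)) = smult (to_fract (d * c)) (pCons u q)"
      using u cP by (simp add: map_poly_pCons)
    then show ?case using u cP by (intro exI[of _ "d * c"]) auto
  qed (intro exI[of _ 1] exI[of _ 0], simp)
  then show ?thesis using that by blast
qed

text \<open>Bezout over \<open>\<real>(x)[y]\<close>, with the denominators (polynomials in \<open>x\<close>) cleared.\<close>
lemma poly_xy_bezout_cofactors: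
  fixes A B :: "real poly poly"
  assumes "A \<noteq> 0 \<or> B \<noteq> 0"
  obtains c k G A' B' S T where "c \<noteq> 0" "k \<noteq> 0"
    "smult c A = G * A'" "smult c B = G * B'" "S * A' + T * B' = [:k:]"
proof -
  from assms have "fract_poly A \<noteq> 0 \<or> fract_poly B \<noteq> 0" by simp
  then obtain g s t a' b' where gab: "fract_poly A = g * a'" "fract_poly B = g * b'"
    "s * a' + t * b' = 1"
    by (rule field_poly_bezout_cofactors)
  obtain cg G where cg: "cg \<noteq> 0" "fract_poly G = smult (to_fract cg) g"
    by (rule fract_poly_clear_denominators)
  obtain ca A0 where ca: "ca \<noteq> 0" "fract_poly A0 = smult (to_fract ca) a'"
    by (rule fract_poly_clear_denominators)
  obtain cb B0 where cb: "cb \<noteq> 0" "fract_poly B0 = smult (to_fract cb) b'"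
    by (rule fract_poly_clear_denominators)
  obtain cs S where cs: "cs \<noteq> 0" "fract_poly S = smult (to_fract cs) s"
    by (rule fract_poly_clear_denominators)
  obtain ct T where ct: "ct \<noteq> 0" "fract_poly T = smult (to_fract ct) t"
    by (rule fract_poly_clear_denominators)
  show ?thesis
  proof (rule that)
    show "cg * ca * cb \<noteq> 0" "ca * cb * cs * ct \<noteq> 0" using cg ca cb cs ct by simp_all
    have "fract_poly (smult (cg * ca * cb) A) = fract_poly (G * smult cb A0)"
      using cg ca gab by (simp add: mult_ac)
    then show "smult (cg * ca * cb) A = G * smult cb A0" by (simp only: fract_poly_eq_iff)
    have "fract_poly (smult (cg * ca * cb) B) = fract_poly (G * smult ca B0)"
      using cg cb gab by (simp add: mult_ac)
    then show "smult (cg * ca * cb) B = G * smult ca B0" by (simp only: fract_poly_eq_iff)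
    have "fract_poly (smult ct S * smult cb A0 + smult cs T * smult ca B0) =
        smult (to_fract (ca * cb * cs * ct)) (s * a' + t * b')"
      using cs ca ct cb by (simp add: algebra_simps smult_add_right)
    also have "\<dots> = fract_poly [:ca * cb * cs * ct:]" using gab(3) by (simp add: map_poly_pCons)
    finally show "smult ct S * smult cb A0 + smult cs T * smult ca B0 = [:ca * cb * cs * ct:]"
      by (simp only: fract_poly_eq_iff)
  qed
qed

text \<open>At a common zero off the curves \<open>c(x) k(x) = 0\<close>, the cofactors \<open>A'\<close>, \<open>B'\<close> cannot both vanish,
  so the common factor \<open>G\<close> does, and then the Jacobian of \<open>c A\<close> and \<open>c B\<close> vanishes there.\<close>
lemma finite_fst_nondegenerate_common_zeros:
  "finite (fst ` {p. poly_xy A p = 0 \<and> poly_xy B p = 0 \<and> poly_xy (pjac A B) p \<noteq> 0})"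
proof (cases "A = 0 \<and> B = 0")
  case True
  then show ?thesis by (simp add: pjac_def pderiv_x_def pderiv_y_def)
next
  case False
  then obtain c k G A' B' S T where ck: "c \<noteq> 0" "k \<noteq> 0" and
    A: "smult c A = G * A'" and B: "smult c B = G * B'" and ST: "S * A' + T * B' = [:k:]"
    using poly_xy_bezout_cofactors by metis
  have "fst ` {p. poly_xy A p = 0 \<and> poly_xy B p = 0 \<and> poly_xy (pjac A B) p \<noteq> 0}
      \<subseteq> {x. poly (c * k) x = 0}"
  proof (rule image_subsetI, rule CollectI, rule ccontr)
    fix p assume p: "p \<in> {p. poly_xy A p = 0 \<and> poly_xy B p = 0 \<and> poly_xy (pjac A B) p \<noteq> 0}"
      and nz: "poly (c * k) (fst p) \<noteq> 0"
    have "poly_xy S p * poly_xy A' p + poly_xy T p * poly_xy B' p \<noteq> 0"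
      using arg_cong[OF ST, of "\<lambda>P. poly_xy P p"] nz by simp
    moreover have "poly_xy G p * poly_xy A' p = 0" "poly_xy G p * poly_xy B' p = 0"
      using arg_cong[OF A, of "\<lambda>P. poly_xy P p"] arg_cong[OF B, of "\<lambda>P. poly_xy P p"] p
      by simp_all
    ultimately have G0: "poly_xy G p = 0" by auto
    have "poly_xy (pjac ([:c:] * A) ([:c:] * B)) p = poly (c * c) (fst p) * poly_xy (pjac A B) p"
      using p by (subst poly_xy_pjac_mult_zeros) auto
    also have "pjac ([:c:] * A) ([:c:] * B) = pjac (A' * G) (B' * G)"
      using A B by (simp add: mult.commute)
    also have "poly_xy (pjac (A' * G) (B' * G)) p = 0"
      using G0 by (subst poly_xy_pjac_mult_zeros) (simp_all add: pjac_def)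
    finally have "poly (c * c) (fst p) * poly_xy (pjac A B) p = 0" by simp
    then show False using p nz by simp
  qed
  moreover have "c * k \<noteq> 0" using ck by simp
  ultimately show ?thesis using finite_subset poly_roots_finite by blast
qed

lemma finite_nondegenerate_common_zeros:
  "finite {p. poly_xy A p = 0 \<and> poly_xy B p = 0 \<and> poly_xy (pjac A B) p \<noteq> 0}"
    (is "finite ?Z")
proof -
  obtain A' where A': "\<And>x y. poly_xy A' (x, y) = poly_xy A (y, x)" using poly_xy_swap[of A] by blast
  obtain B' where B': "\<And>x y. poly_xy B' (x, y) = poly_xy B (y, x)" using poly_xy_swap[of B] by blast
  have swap_derivs: "px (poly_xy P') (x, y) = py (poly_xy P) (y, x)"
    "py (poly_xy P') (x, y) = px (poly_xy P) (y, x)"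
    if "\<And>x y. poly_xy P' (x, y) = poly_xy P (y, x)" for P P' x y
    unfolding px_def py_def using that by simp_all
  have jac_swap: "poly_xy (pjac A' B') (x, y) = - poly_xy (pjac A B) (y, x)" for x y
    using swap_derivs[OF A'] swap_derivs[OF B'] by (simp add: jac_poly_xy[symmetric] jac_def)
  have "snd ` ?Z \<subseteq> fst ` {p. poly_xy A' p = 0 \<and> poly_xy B' p = 0 \<and> poly_xy (pjac A' B') p \<noteq> 0}"
  proof
    fix y assume "y \<in> snd ` ?Z"
    then obtain x where "(x, y) \<in> ?Z" by auto
    then have "(y, x) \<in> {p. poly_xy A' p = 0 \<and> poly_xy B' p = 0 \<and> poly_xy (pjac A' B') p \<noteq> 0}"
      using A' B' jac_swap by simp
    then show "y \<in> fst ` {p. poly_xy A' p = 0 \<and> poly_xy B' p = 0 \<and> poly_xy (pjac A' B') p \<noteq> 0}"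
      by force
  qed
  then have "finite (snd ` ?Z)"
    using finite_fst_nondegenerate_common_zeros finite_subset by blast
  moreover have "finite (fst ` ?Z)" by (rule finite_fst_nondegenerate_common_zeros)
  moreover have "?Z \<subseteq> fst ` ?Z \<times> snd ` ?Z" by force
  ultimately show ?thesis using finite_subset by blast
qed

section \<open>Jets of corank at most one\<close>

definition m11 :: "(pt \<Rightarrow>\<^sub>L pt) \<Rightarrow> real" where "m11 L = fst (blinfun_apply L (1, 0))"
definition m12 :: "(pt \<Rightarrow>\<^sub>L pt) \<Rightarrow> real" where "m12 L = fst (blinfun_apply L (0, 1))"
definition m21 :: "(pt \<Rightarrow>\<^sub>L pt) \<Rightarrow> real" where "m21 L = snd (blinfun_apply L (1, 0))"
definition m22 :: "(pt \<Rightarrow>\<^sub>L pt) \<Rightarrow> real" where "m22 L = snd (blinfun_apply L (0, 1))"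

definition det22 :: "(pt \<Rightarrow>\<^sub>L pt) \<Rightarrow> real" where
  "det22 L = m11 L * m22 L - m12 L * m21 L"

text \<open>The polarization of \<open>det22\<close>: \<open>det22 (L + t M) = det22 L + t mixed_det22 L M + t\<^sup>2 det22 M\<close>.\<close>
definition mixed_det22 :: "(pt \<Rightarrow>\<^sub>L pt) \<Rightarrow> (pt \<Rightarrow>\<^sub>L pt) \<Rightarrow> real" where
  "mixed_det22 L M = m11 L * m22 M + m22 L * m11 M - m12 L * m21 M - m21 L * m12 M"

lemma matrix_entries_simps [simp]:
  "m11 (L + M) = m11 L + m11 M" "m12 (L + M) = m12 L + m12 M"
  "m21 (L + M) = m21 L + m21 M" "m22 (L + M) = m22 L + m22 M"
  "m11 (L - M) = m11 L - m11 M" "m12 (L - M) = m12 L - m12 M"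
  "m21 (L - M) = m21 L - m21 M" "m22 (L - M) = m22 L - m22 M"
  "m11 (r *\<^sub>R L) = r * m11 L" "m12 (r *\<^sub>R L) = r * m12 L"
  "m21 (r *\<^sub>R L) = r * m21 L" "m22 (r *\<^sub>R L) = r * m22 L"
  "m11 (mk22 a b c d) = a" "m12 (mk22 a b c d) = b" "m21 (mk22 a b c d) = c" "m22 (mk22 a b c d) = d"
  by (simp_all add: m11_def m12_def m21_def m22_def blinfun.add_left blinfun.diff_left
      blinfun.scaleR_left lin22_def)

lemma blinfun_apply_eq_lin22: "blinfun_apply L = lin22 (m11 L) (m12 L) (m21 L) (m22 L)"
proof
  fix v :: pt
  have "v = fst v *\<^sub>R (1, 0) + snd v *\<^sub>R (0, 1)" by (simp add: prod_eq_iff)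
  then have "blinfun_apply L v = fst v *\<^sub>R blinfun_apply L (1, 0) + snd v *\<^sub>R blinfun_apply L (0, 1)"
    by (metis blinfun.add_right blinfun.scaleR_right)
  then show "blinfun_apply L v = lin22 (m11 L) (m12 L) (m21 L) (m22 L) v"
    by (simp add: lin22_def m11_def m12_def m21_def m22_def prod_eq_iff mult.commute)
qed

lemma det22_add_scaleR:
  "det22 (L + t *\<^sub>R M + s *\<^sub>R E) = det22 L + t * mixed_det22 L M + t\<^sup>2 * det22 M
     + s * (mixed_det22 L E + t * mixed_det22 M E) + s\<^sup>2 * det22 E"
  by (simp add: det22_def mixed_det22_def algebra_simps power2_eq_square)

lemma mem_Sjet_iff: "(x, y, L) \<in> Sjet r \<longleftrightarrow>
    r = (if det22 L \<noteq> 0 then 0 else if m11 L = 0 \<and> m12 L = 0 \<and> m21 L = 0 \<and> m22 L = 0 then 2 else 1)"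
  unfolding Sjet_def blinfun_apply_eq_lin22 dim_range_lin22 det22_def by auto

lemma tangent_set_Sjet0:
  assumes "det22 L \<noteq> 0"
  shows "tangent_set (Sjet 0) (x, y, L) = UNIV"
proof (intro set_eqI iffI UNIV_I)
  fix w :: jet1
  obtain w1 w2 W where w: "w = (w1, w2, W)" by (metis prod.collapse)
  have "isCont (\<lambda>t. det22 (L + t *\<^sub>R W)) 0" by (simp add: det22_def algebra_simps)
  moreover have "det22 (L + 0 *\<^sub>R W) \<noteq> 0" using assms by simp
  ultimately have "\<exists>e>0. \<forall>t\<in>ball 0 e. det22 (L + t *\<^sub>R W) \<noteq> 0" by (rule nonzero_near_0)
  then obtain e where e: "e > 0" "\<And>t. t \<in> ball 0 e \<Longrightarrow> det22 (L + t *\<^sub>R W) \<noteq> 0"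
    by blast
  show "w \<in> tangent_set (Sjet 0) (x, y, L)"
  proof (rule tangent_setI[OF e(1)])
    show "((\<lambda>t. t *\<^sub>R w + (x, y, L)) has_vector_derivative w) (at 0)"
      using has_vector_derivative_add_const[THEN iffD2, OF DERIV_ident[THEN
          has_vector_derivative_scaleR[OF _ has_vector_derivative_const]]] by simp
    show "t *\<^sub>R w + (x, y, L) \<in> Sjet 0" if "t \<in> ball 0 e" for t
      using e(2)[OF that] by (simp add: w mem_Sjet_iff algebra_simps)
  qed simp
qed

lemma exists_transversal_rank_one:
  assumes "\<not> (m11 L = 0 \<and> m12 L = 0 \<and> m21 L = 0 \<and> m22 L = 0)"
  obtains E where "det22 E = 0" "mixed_det22 L E \<noteq> 0"
proof -
  consider "m22 L \<noteq> 0" | "m11 L \<noteq> 0" | "m21 L \<noteq> 0" | "m12 L \<noteq> 0" using assms by blast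
  then show ?thesis
  proof cases
    case 1 then show ?thesis using that[of "mk22 1 0 0 0"] by (simp add: det22_def mixed_det22_def)
  next
    case 2 then show ?thesis using that[of "mk22 0 0 0 1"] by (simp add: det22_def mixed_det22_def)
  next
    case 3 then show ?thesis using that[of "mk22 0 1 0 0"] by (simp add: det22_def mixed_det22_def)
  next
    case 4 then show ?thesis using that[of "mk22 0 0 1 0"] by (simp add: det22_def mixed_det22_def)
  qed
qed

text \<open>Corank-one jets form a hypersurface: a direction \<open>M\<close> annihilated by the differential of
  \<open>det22\<close> at \<open>L\<close> is followed, to second order, by the curve \<open>L + t M + \<phi>(t) E\<close> with
  \<open>\<phi>(t) = - t\<^sup>2 det22 M / (mixed_det22 L E + t mixed_det22 M E)\<close>, chosen to keep the determinant zero.\<close>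
lemma tangent_set_Sjet1:
  assumes L: "det22 L = 0" "\<not> (m11 L = 0 \<and> m12 L = 0 \<and> m21 L = 0 \<and> m22 L = 0)"
    and M: "mixed_det22 L M = 0"
  shows "(u, w, M) \<in> tangent_set (Sjet 1) (x, y, L)"
proof -
  obtain E where E: "det22 E = 0" "mixed_det22 L E \<noteq> 0"
    using exists_transversal_rank_one[OF L(2)] by blast
  define \<phi> where "\<phi> t = - (t\<^sup>2 * det22 M) / (mixed_det22 L E + t * mixed_det22 M E)" for t :: real
  define X where "X t = L + t *\<^sub>R M + \<phi> t *\<^sub>R E" for t
  define n where "n t = (m11 (X t))\<^sup>2 + (m12 (X t))\<^sup>2 + (m21 (X t))\<^sup>2 + (m22 (X t))\<^sup>2" for t
  have "isCont (\<lambda>t. (mixed_det22 L E + t * mixed_det22 M E) * n t) 0"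
    unfolding n_def X_def \<phi>_def matrix_entries_simps using E(2) by (intro continuous_intros) auto
  moreover have "(mixed_det22 L E + 0 * mixed_det22 M E) * n 0 \<noteq> 0"
    using L(2) E(2) by (simp add: n_def X_def \<phi>_def add_nonneg_eq_0_iff)
  ultimately have "\<exists>e>0. \<forall>t\<in>ball 0 e. (mixed_det22 L E + t * mixed_det22 M E) * n t \<noteq> 0"
    by (rule nonzero_near_0)
  then obtain e where e: "e > 0"
    "\<And>t. t \<in> ball 0 e \<Longrightarrow> (mixed_det22 L E + t * mixed_det22 M E) * n t \<noteq> 0"
    by blast
  define \<gamma> where "\<gamma> t = (t *\<^sub>R (u, w, M) + \<phi> t *\<^sub>R ((0::pt), (0::pt), E)) + (x, y, L)" for t
  show ?thesis
  proof (rule tangent_setI[OF e(1)])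
    fix t :: real assume "t \<in> ball 0 e"
    then have q: "mixed_det22 L E + t * mixed_det22 M E \<noteq> 0" and "n t \<noteq> 0"
      using e(2) by auto
    have "det22 (X t) = 0"
      unfolding X_def det22_add_scaleR using L(1) M E(1) q
      by (simp add: \<phi>_def field_simps power2_eq_square)
    moreover have "\<not> (m11 (X t) = 0 \<and> m12 (X t) = 0 \<and> m21 (X t) = 0 \<and> m22 (X t) = 0)"
      using \<open>n t \<noteq> 0\<close> by (auto simp: n_def)
    moreover have "\<gamma> t = (x + t *\<^sub>R u, y + t *\<^sub>R w, X t)"
      by (simp add: \<gamma>_def X_def algebra_simps)
    ultimately show "\<gamma> t \<in> Sjet 1" by (simp add: mem_Sjet_iff)
  next
    have "(\<phi> has_real_derivative 0) (at 0)"
      unfolding \<phi>_def[abs_def] using E(2) by (auto intro!: derivative_eq_intros)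
    then show "(\<gamma> has_vector_derivative (u, w, M)) (at 0)"
      unfolding \<gamma>_def[abs_def]
      by (auto intro!: has_vector_derivative_add_const[THEN iffD2] derivative_eq_intros
          simp: has_real_derivative_iff_has_vector_derivative)
  qed (simp add: \<gamma>_def \<phi>_def)
qed

section \<open>Fold and cusp points of polynomial maps\<close>

locale polynomial_map_no_common_zero =
  fixes f :: "pt \<Rightarrow> pt" and P1 P2 :: "real poly poly"
  assumes comp1_f: "comp1 f = poly_xy P1" and comp2_f: "comp2 f = poly_xy P2"
    and no_common_zero: "\<And>p. \<not> (Jdet f p = 0 \<and> F1 f p = 0 \<and> F2 f p = 0
      \<and> jac (Jdet f) (F1 f) p = 0 \<and> jac (Jdet f) (F2 f) p = 0)"
begin

definition PJ :: "real poly poly" where "PJ = pjac P1 P2"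
definition PF1 :: "real poly poly" where "PF1 = pjac PJ P1"
definition PF2 :: "real poly poly" where "PF2 = pjac PJ P2"
definition f1x :: "pt \<Rightarrow> real" where "f1x = poly_xy (pderiv_x P1)"
definition f1y :: "pt \<Rightarrow> real" where "f1y = poly_xy (pderiv_y P1)"
definition f2x :: "pt \<Rightarrow> real" where "f2x = poly_xy (pderiv_x P2)"
definition f2y :: "pt \<Rightarrow> real" where "f2y = poly_xy (pderiv_y P2)"
definition Jx :: "pt \<Rightarrow> real" where "Jx = poly_xy (pderiv_x PJ)"
definition Jy :: "pt \<Rightarrow> real" where "Jy = poly_xy (pderiv_y PJ)"

lemma Jdet_eq: "Jdet f = poly_xy PJ"
  by (simp add: Jdet_def comp1_f comp2_f jac_poly_xy PJ_def)

lemma F1_eq: "F1 f = poly_xy PF1"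
  by (simp add: F1_def Fi_def Jdet_eq comp1_f jac_poly_xy PF1_def)

lemma F2_eq: "F2 f = poly_xy PF2"
  by (simp add: F2_def Fi_def Jdet_eq comp2_f jac_poly_xy PF2_def)

lemma J_eq_det: "poly_xy PJ p = f1x p * f2y p - f1y p * f2x p"
  by (simp add: PJ_def pjac_def f1x_def f1y_def f2x_def f2y_def)

lemma F1_eq_Jx_Jy: "poly_xy PF1 p = Jx p * f1y p - Jy p * f1x p"
  by (simp add: PF1_def pjac_def Jx_def Jy_def f1x_def f1y_def)

lemma F2_eq_Jx_Jy: "poly_xy PF2 p = Jx p * f2y p - Jy p * f2x p"
  by (simp add: PF2_def pjac_def Jx_def Jy_def f2x_def f2y_def)

lemma no_common_zero_poly:
  "\<not> (poly_xy PJ p = 0 \<and> poly_xy PF1 p = 0 \<and> poly_xy PF2 p = 0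
      \<and> poly_xy (pjac PJ PF1) p = 0 \<and> poly_xy (pjac PJ PF2) p = 0)"
  using no_common_zero[of p] by (simp add: Jdet_eq F1_eq F2_eq jac_poly_xy)

lemma grad_J_nonzero: "poly_xy PJ p = 0 \<Longrightarrow> (Jx p, Jy p) \<noteq> (0, 0)"
  using no_common_zero_poly[of p]
  by (auto simp: F1_eq_Jx_Jy F2_eq_Jx_Jy pjac_def Jx_def Jy_def)

lemma f_eq: "f = (\<lambda>p. (poly_xy P1 p, poly_xy P2 p))"
  using comp1_f comp2_f unfolding comp1_def comp2_def by (metis prod.collapse)

lemma has_derivative_f: "(f has_derivative lin22 (f1x p) (f1y p) (f2x p) (f2y p)) (at p)"
  unfolding f_eq lin22_def[abs_def] f1x_def f1y_def f2x_def f2y_def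
  by (intro has_derivative_Pair poly_xy_has_derivative)

lemma Df_eq: "Df f p = lin22 (f1x p) (f1y p) (f2x p) (f2y p)"
  unfolding Df_def using has_derivative_f frechet_derivative_at by metis

text \<open>Where all first partials of \<open>f\<close> vanish, so do \<open>J\<close> and its gradient (product rule).\<close>
lemma Df_nonzero: "\<not> (f1x p = 0 \<and> f1y p = 0 \<and> f2x p = 0 \<and> f2y p = 0)"
proof
  assume "f1x p = 0 \<and> f1y p = 0 \<and> f2x p = 0 \<and> f2y p = 0"
  then have "poly_xy PJ p = 0" "Jx p = 0" "Jy p = 0"
    by (simp_all add: J_eq_det Jx_def Jy_def PJ_def pjac_def pderiv_x_diff pderiv_y_diff
        poly_xy_pderiv_x_mult poly_xy_pderiv_y_mult f1x_def f1y_def f2x_def f2y_def)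
  then show False using grad_J_nonzero by simp
qed

lemma corank_eq: "corank f p = (if poly_xy PJ p = 0 then 1 else 0)"
  using Df_nonzero[of p] by (simp add: corank_def Df_eq dim_range_lin22 J_eq_det)

lemma S1_eq: "Sr f 1 = {q. poly_xy PJ q = 0}"
  by (auto simp: Sr_def corank_eq)

lemma kerDf_eq: "kerDf f p = {v. lin22 (f1x p) (f1y p) (f2x p) (f2y p) v = 0}"
  by (simp add: kerDf_def Df_eq)

lemma tangent_set_S1:
  assumes "poly_xy PJ p = 0"
  shows "tangent_set (Sr f 1) p = {v. Jx p * fst v + Jy p * snd v = 0}"
  unfolding S1_eq Jx_def Jy_def
  by (rule poly_xy.tangent_set_level_set[OF assms])
    (use grad_J_nonzero[OF assms] in \<open>simp add: Jx_def Jy_def\<close>)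

text \<open>On \<open>S\<^sub>1(f)\<close> the rows of \<open>Df\<close>, rotated by a right angle, lie in \<open>ker Df\<close>; paired with
  \<open>dJ\<close> they give \<open>F\<^sub>1\<close> and \<open>F\<^sub>2\<close> (see \<open>F1_eq_Jx_Jy\<close>, \<open>F2_eq_Jx_Jy\<close>).\<close>
lemma rotated_rows_in_kerDf:
  assumes "poly_xy PJ p = 0"
  shows "lin22 (f1x p) (f1y p) (f2x p) (f2y p) (\<alpha> * f1y p + \<beta> * f2y p, - (\<alpha> * f1x p + \<beta> * f2x p)) = 0"
  using assms by (simp add: lin22_def J_eq_det zero_prod_def algebra_simps)

lemma transversal_kernel_vector:
  assumes J0: "poly_xy PJ p = 0" and F: "poly_xy PF1 p \<noteq> 0 \<or> poly_xy PF2 p \<noteq> 0"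
  obtains \<eta> where "\<eta> \<in> kerDf f p" "Jx p * fst \<eta> + Jy p * snd \<eta> \<noteq> 0"
proof -
  have "\<exists>\<alpha> \<beta>. \<alpha> * poly_xy PF1 p + \<beta> * poly_xy PF2 p \<noteq> 0"
  proof (cases "poly_xy PF1 p = 0")
    case True then show ?thesis using F by (intro exI[of _ 0] exI[of _ 1]) simp
  next
    case False then show ?thesis by (intro exI[of _ 1] exI[of _ 0]) simp
  qed
  then obtain \<alpha> \<beta> where "\<alpha> * poly_xy PF1 p + \<beta> * poly_xy PF2 p \<noteq> 0" by blast
  moreover have "Jx p * (\<alpha> * f1y p + \<beta> * f2y p) + Jy p * - (\<alpha> * f1x p + \<beta> * f2x p)
      = \<alpha> * poly_xy PF1 p + \<beta> * poly_xy PF2 p"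
    by (simp add: F1_eq_Jx_Jy F2_eq_Jx_Jy algebra_simps)
  ultimately show ?thesis
    using that[of "(\<alpha> * f1y p + \<beta> * f2y p, - (\<alpha> * f1x p + \<beta> * f2x p))"]
      rotated_rows_in_kerDf[OF J0] by (simp add: kerDf_eq)
qed

lemma fold_pointI:
  assumes J0: "poly_xy PJ p = 0" and F: "poly_xy PF1 p \<noteq> 0 \<or> poly_xy PF2 p \<noteq> 0"
  shows "fold_point f p"
proof -
  obtain \<eta> where "\<eta> \<in> kerDf f p" "Jx p * fst \<eta> + Jy p * snd \<eta> \<noteq> 0"
    using transversal_kernel_vector[OF assms] .
  then have "setsum (tangent_set (Sr f 1) p) (kerDf f p) = UNIV"
    unfolding tangent_set_S1[OF J0]
    by (intro setsum_line_transversal) (auto simp: kerDf_eq lin22_scaleR)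
  then show ?thesis unfolding fold_point_def S1_eq using J0 by simp
qed

lemma tangent_set_S1_ne_kerDf:
  assumes J0: "poly_xy PJ p = 0" and F: "poly_xy PF1 p \<noteq> 0 \<or> poly_xy PF2 p \<noteq> 0"
  shows "tangent_set (Sr f 1) p \<noteq> kerDf f p"
  using transversal_kernel_vector[OF assms] tangent_set_S1[OF J0] by blast

lemma tangent_set_S1_eq_kerDf:
  assumes J0: "poly_xy PJ p = 0" and F: "poly_xy PF1 p = 0" "poly_xy PF2 p = 0"
  shows "tangent_set (Sr f 1) p = kerDf f p"
proof -
  text \<open>Both sets are lines through the origin containing a common nonzero vector \<open>\<eta>\<close>.\<close>
  obtain \<alpha> \<beta> where "\<alpha> * f1y p + \<beta> * f2y p \<noteq> 0 \<or> \<alpha> * f1x p + \<beta> * f2x p \<noteq> 0"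
    using Df_nonzero[of p] by (metis mult_1 mult_zero_left add_0 add_0_right)
  define \<eta> where "\<eta> = (\<alpha> * f1y p + \<beta> * f2y p, - (\<alpha> * f1x p + \<beta> * f2x p))"
  have "\<eta> \<noteq> 0" using \<open>_ \<or> _\<close> by (auto simp: \<eta>_def zero_prod_def)
  have \<eta>_ker: "lin22 (f1x p) (f1y p) (f2x p) (f2y p) \<eta> = 0"
    unfolding \<eta>_def by (rule rotated_rows_in_kerDf[OF J0])
  have \<eta>_tan: "Jx p * fst \<eta> + Jy p * snd \<eta> = 0"
    using F by (simp add: \<eta>_def F1_eq_Jx_Jy F2_eq_Jx_Jy algebra_simps)
  have "v \<in> kerDf f p" if v: "Jx p * fst v + Jy p * snd v = 0" for v
  proof -
    obtain s where "v = s *\<^sub>R \<eta>"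
      using orthogonal_vectors_collinear_2[OF grad_J_nonzero[OF J0] v \<eta>_tan \<open>\<eta> \<noteq> 0\<close>] .
    then show ?thesis using \<eta>_ker by (simp add: kerDf_eq lin22_scaleR)
  qed
  moreover have "Jx p * fst v + Jy p * snd v = 0" if "v \<in> kerDf f p" for v
  proof -
    have rows: "f1x p * fst v + f1y p * snd v = 0" "f2x p * fst v + f2y p * snd v = 0"
      "f1x p * fst \<eta> + f1y p * snd \<eta> = 0" "f2x p * fst \<eta> + f2y p * snd \<eta> = 0"
      using that \<eta>_ker by (simp_all add: kerDf_eq lin22_def prod_eq_iff)
    have "(f1x p, f1y p) \<noteq> (0, 0) \<or> (f2x p, f2y p) \<noteq> (0, 0)" using Df_nonzero by auto
    then obtain s where "v = s *\<^sub>R \<eta>"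
    proof
      assume "(f1x p, f1y p) \<noteq> (0, 0)"
      from orthogonal_vectors_collinear_2[OF this rows(1,3) \<open>\<eta> \<noteq> 0\<close>] that show ?thesis .
    next
      assume "(f2x p, f2y p) \<noteq> (0, 0)"
      from orthogonal_vectors_collinear_2[OF this rows(2,4) \<open>\<eta> \<noteq> 0\<close>] that show ?thesis .
    qed
    then have "Jx p * fst v + Jy p * snd v = s * (Jx p * fst \<eta> + Jy p * snd \<eta>)"
      by (simp add: algebra_simps)
    then show ?thesis using \<eta>_tan by simp
  qed
  ultimately show ?thesis unfolding tangent_set_S1[OF J0] by blast
qed

lemma derivative_along_S1:
  assumes "poly_xy PJ p = 0" "\<gamma> 0 = p" "(\<gamma> has_vector_derivative \<gamma>' 0) (at 0)"
    "\<gamma>' 0 = (1 / ((Jx p)\<^sup>2 + (Jy p)\<^sup>2)) *\<^sub>R (- Jy p, Jx p)"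
  shows "((\<lambda>t. poly_xy Q (\<gamma> t)) has_real_derivative
      poly_xy (pjac PJ Q) p / ((Jx p)\<^sup>2 + (Jy p)\<^sup>2)) (at 0)"
proof -
  define n where "n = (Jx p)\<^sup>2 + (Jy p)\<^sup>2"
  have "n \<noteq> 0" using grad_J_nonzero[OF assms(1)] by (auto simp: n_def add_nonneg_eq_0_iff)
  moreover have "\<gamma>' 0 = (1 / n) *\<^sub>R (- Jy p, Jx p)" using assms(4) by (simp add: n_def)
  ultimately have "poly_xy (pderiv_x Q) p * fst (\<gamma>' 0) + poly_xy (pderiv_y Q) p * snd (\<gamma>' 0)
      = poly_xy (pjac PJ Q) p / n"
    by (simp add: pjac_def Jx_def Jy_def field_simps)
  then show ?thesis
    using poly_xy.chain_rule[OF assms(3), of Q] assms(2) by (simp add: n_def)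
qed

lemma simple_zero_along_S1:
  assumes J0: "poly_xy PJ p = 0" and F: "poly_xy PF1 p = 0" "poly_xy PF2 p = 0"
    and \<gamma>: "\<gamma> 0 = p" "(\<gamma> has_vector_derivative \<gamma>' 0) (at 0)"
    "\<gamma>' 0 = (1 / ((Jx p)\<^sup>2 + (Jy p)\<^sup>2)) *\<^sub>R (- Jy p, Jx p)"
    and \<alpha>\<beta>: "\<alpha> * poly_xy (pjac PJ PF1) p + \<beta> * poly_xy (pjac PJ PF2) p \<noteq> 0"
  defines "h \<equiv> \<lambda>t. \<alpha> * poly_xy PF1 (\<gamma> t) + \<beta> * poly_xy PF2 (\<gamma> t)"
  shows "h 0 = 0 \<and> (\<exists>c. c \<noteq> 0 \<and> (h has_real_derivative c) (at 0))"
proof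
  show "h 0 = 0" using F \<gamma>(1) by (simp add: h_def)
  have "(h has_real_derivative (\<alpha> * poly_xy (pjac PJ PF1) p + \<beta> * poly_xy (pjac PJ PF2) p)
      / ((Jx p)\<^sup>2 + (Jy p)\<^sup>2)) (at 0)"
    unfolding h_def using derivative_along_S1[of p \<gamma> \<gamma>', OF J0 \<gamma>]
    by (auto intro!: derivative_eq_intros simp: add_divide_distrib mult.commute)
  moreover have "(\<alpha> * poly_xy (pjac PJ PF1) p + \<beta> * poly_xy (pjac PJ PF2) p)
      / ((Jx p)\<^sup>2 + (Jy p)\<^sup>2) \<noteq> 0"
    using \<alpha>\<beta> grad_J_nonzero[OF J0] by (auto simp: add_nonneg_eq_0_iff)
  ultimately show "\<exists>c. c \<noteq> 0 \<and> (h has_real_derivative c) (at 0)" by blast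
qed

lemma has_derivative_J_covec2:
  "(poly_xy PJ has_derivative blinfun_apply (covec2 (Jx q) (Jy q))) (at q)"
  using poly_xy_has_derivative by (simp add: Jx_def Jy_def)

lemma continuous_on_covec2_grad_J: "continuous_on S (\<lambda>q. covec2 (Jx q) (Jy q))"
  unfolding Jx_def Jy_def by (intro continuous_intros)

lemma covec2_grad_J_nonzero: "poly_xy PJ p = 0 \<Longrightarrow> covec2 (Jx p) (Jy p) \<noteq> 0"
  using grad_J_nonzero[of p] blinfun_apply_covec2[of "Jx p" "Jy p"]
  by (metis (no_types, lifting) blinfun.zero_left sum_squares_eq_zero_iff fst_conv snd_conv)

lemma cusp_pointI:
  assumes J0: "poly_xy PJ p = 0" and F: "poly_xy PF1 p = 0" "poly_xy PF2 p = 0"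
  shows "cusp_point f p"
proof -
  have "poly_xy (pjac PJ PF1) p \<noteq> 0 \<or> poly_xy (pjac PJ PF2) p \<noteq> 0"
    using no_common_zero_poly[of p] J0 F by blast
  then obtain \<alpha> \<beta> where \<alpha>\<beta>: "\<alpha> * poly_xy (pjac PJ PF1) p + \<beta> * poly_xy (pjac PJ PF2) p \<noteq> 0"
    "(\<alpha> * f1y p + \<beta> * f2y p, - (\<alpha> * f1x p + \<beta> * f2x p)) \<noteq> (0, 0)"
    using exists_combination_nonzero[OF _ Df_nonzero] by blast
  text \<open>\<open>\<xi>\<close> and \<open>dk\<close> are the kernel field and \<open>dJ\<close> in the definition of a cusp point.\<close>
  define \<xi> where "\<xi> q = (\<alpha> * f1y q + \<beta> * f2y q, - (\<alpha> * f1x q + \<beta> * f2x q))" for q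
  define dk where "dk q = covec2 (Jx q) (Jy q)" for q
  have cont_\<xi>: "continuous_on S \<xi>" for S
    unfolding \<xi>_def[abs_def] f1x_def f1y_def f2x_def f2y_def by (intro continuous_intros)
  have "open {q. \<xi> q \<noteq> 0}" by (rule open_Collect_neq[OF cont_\<xi> continuous_on_const])
  moreover have "p \<in> {q. \<xi> q \<noteq> 0}" using \<alpha>\<beta>(2) by (simp add: \<xi>_def zero_prod_def)
  ultimately obtain U r \<gamma> \<gamma>' where U: "open U" "p \<in> U" "U \<subseteq> {q. \<xi> q \<noteq> 0}" and "r > 0" and
    \<gamma>: "\<gamma> 0 = p" "inj_on \<gamma> (ball 0 r)" "\<gamma> ` ball 0 r = U \<inter> {q. poly_xy PJ q = 0}"
    "\<And>t. t \<in> ball 0 r \<Longrightarrow> (\<gamma> has_vector_derivative \<gamma>' t) (at t)"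
    "\<And>t. t \<in> ball 0 r \<Longrightarrow> \<gamma>' t \<noteq> 0" "continuous_on (ball 0 r) \<gamma>'"
    "\<gamma>' 0 = (1 / ((Jx p)\<^sup>2 + (Jy p)\<^sup>2)) *\<^sub>R (- Jy p, Jx p)"
    unfolding Jx_def Jy_def
    by (rule poly_xy.level_set_local_parametrization[OF J0 grad_J_nonzero[OF J0, unfolded Jx_def Jy_def]])
      blast+
  have \<gamma>'0: "(\<gamma> has_vector_derivative \<gamma>' 0) (at 0)" using \<gamma>(4)[of 0] \<open>r > 0\<close> by simp
  define h where "h = (\<lambda>t. blinfun_apply (dk (\<gamma> t)) (\<xi> (\<gamma> t)))"
  have "h = (\<lambda>t. \<alpha> * poly_xy PF1 (\<gamma> t) + \<beta> * poly_xy PF2 (\<gamma> t))"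
    by (simp add: fun_eq_iff h_def dk_def \<xi>_def F1_eq_Jx_Jy F2_eq_Jx_Jy algebra_simps)
  then have h: "h 0 = 0 \<and> (\<exists>c. c \<noteq> 0 \<and> (h has_real_derivative c) (at 0))"
    using simple_zero_along_S1[of p \<gamma> \<gamma>', OF J0 F \<gamma>(1) \<gamma>'0 \<gamma>(7) \<alpha>\<beta>(1)] by simp
  have dk: "\<And>q. (poly_xy PJ has_derivative blinfun_apply (dk q)) (at q)"
    "continuous_on U dk" "dk p \<noteq> 0"
    unfolding dk_def[abs_def] by (rule has_derivative_J_covec2 continuous_on_covec2_grad_J
        covec2_grad_J_nonzero[OF J0])+
  have \<xi>_kernel: "\<forall>q\<in>U \<inter> {q. poly_xy PJ q = 0}. \<xi> q \<noteq> 0 \<and> Df f q (\<xi> q) = 0"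
    using U(3) rotated_rows_in_kerDf by (auto simp: Df_eq \<xi>_def)
  show ?thesis
    unfolding cusp_point_def tangent_set_S1_eq_kerDf[OF J0 F, unfolded S1_eq] S1_eq
    by (intro conjI; (rule exI[of _ U], rule exI[of _ "poly_xy PJ"], rule exI[of _ dk],
        rule exI[of _ \<xi>], rule exI[of _ \<gamma>], rule exI[of _ \<gamma>'], rule exI[of _ r])?;
        use \<xi>_kernel h[unfolded h_def] J0 U(1,2) \<open>r > 0\<close> \<gamma> cont_\<xi> dk in auto)
qed

definition djet1 :: "pt \<Rightarrow> pt \<Rightarrow> jet1" where
  "djet1 p v = (v, lin22 (f1x p) (f1y p) (f2x p) (f2y p) v,
     mk22 (dpoly_xy (pderiv_x P1) p v) (dpoly_xy (pderiv_y P1) p v)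
       (dpoly_xy (pderiv_x P2) p v) (dpoly_xy (pderiv_y P2) p v))"

lemma jet1_eq: "jet1 f p = (p, f p, mk22 (f1x p) (f1y p) (f2x p) (f2y p))"
  by (simp add: jet1_def Df_eq mk22_def)

lemma has_derivative_jet1: "(jet1 f has_derivative djet1 p) (at p)"
  unfolding jet1_eq[abs_def] djet1_def[abs_def]
  by (intro has_derivative_Pair has_derivative_ident has_derivative_f
      has_derivative_mk22_poly_xy[of "pderiv_x P1" "pderiv_y P1" "pderiv_x P2" "pderiv_y P2",
        folded f1x_def f1y_def f2x_def f2y_def])

lemma mixed_det22_djet1:
  "mixed_det22 (mk22 (f1x p) (f1y p) (f2x p) (f2y p)) (snd (snd (djet1 p v)))
     = Jx p * fst v + Jy p * snd v"
  by (simp add: djet1_def mixed_det22_def dpoly_xy_def Jx_def Jy_def PJ_def pjac_def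
      pderiv_x_diff pderiv_y_diff poly_xy_pderiv_x_mult poly_xy_pderiv_y_mult
      f1x_def f1y_def f2x_def f2y_def algebra_simps)

lemma transversal_Sjet1:
  assumes J0: "poly_xy PJ p = 0"
  shows "setsum (range (djet1 p)) (tangent_set (Sjet 1) (jet1 f p)) = UNIV"
proof (intro set_eqI iffI UNIV_I)
  fix z :: jet1
  obtain z1 z2 Z where z: "z = (z1, z2, Z)" by (metis prod.collapse)
  define L where "L = mk22 (f1x p) (f1y p) (f2x p) (f2y p)"
  define n where "n = (Jx p)\<^sup>2 + (Jy p)\<^sup>2"
  have "n \<noteq> 0" using grad_J_nonzero[OF J0] by (auto simp: n_def add_nonneg_eq_0_iff)
  text \<open>Choose \<open>v\<close> along \<open>\<nabla>J(p)\<close> so that the remainder is tangent to the corank-one jets.\<close>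
  define v where "v = (mixed_det22 L Z / n) *\<^sub>R (Jx p, Jy p)"
  obtain v1 v2 H where Dv: "djet1 p v = (v1, v2, H)" by (metis prod.collapse)
  have "mixed_det22 L H = Jx p * fst v + Jy p * snd v"
    using mixed_det22_djet1[of p v] by (simp add: Dv L_def)
  also have "\<dots> = (mixed_det22 L Z / n) * n"
    by (simp add: v_def n_def power2_eq_square algebra_simps add_divide_distrib)
  also have "\<dots> = mixed_det22 L Z" using \<open>n \<noteq> 0\<close> by simp
  finally have "mixed_det22 L H = mixed_det22 L Z" .
  then have "mixed_det22 L (Z - H) = 0" by (simp add: mixed_det22_def algebra_simps)
  moreover have "det22 L = 0" using J0 by (simp add: L_def det22_def J_eq_det)
  moreover have "\<not> (m11 L = 0 \<and> m12 L = 0 \<and> m21 L = 0 \<and> m22 L = 0)"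
    using Df_nonzero by (simp add: L_def)
  ultimately have "(z1 - v1, z2 - v2, Z - H) \<in> tangent_set (Sjet 1) (jet1 f p)"
    unfolding jet1_eq L_def[symmetric] by (intro tangent_set_Sjet1)
  moreover have "z = djet1 p v + (z1 - v1, z2 - v2, Z - H)" by (simp add: z Dv)
  ultimately show "z \<in> setsum (range (djet1 p)) (tangent_set (Sjet 1) (jet1 f p))"
    unfolding setsum_def by blast
qed

lemma one_generic: "one_generic f"
  unfolding one_generic_def transversal_def
proof (intro allI impI exI conjI)
  fix r p
  assume "jet1 f p \<in> Sjet r"
  then have r: "r = (if poly_xy PJ p = 0 then 1 else 0)"
    using Df_nonzero[of p] by (simp add: jet1_eq mem_Sjet_iff det22_def J_eq_det)
  show "(jet1 f has_derivative djet1 p) (at p)" by (rule has_derivative_jet1)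
  show "setsum (range (djet1 p)) (tangent_set (Sjet r) (jet1 f p)) = UNIV"
  proof (cases "poly_xy PJ p = 0")
    case True
    then show ?thesis using r transversal_Sjet1 by simp
  next
    case False
    then have "tangent_set (Sjet r) (jet1 f p) = UNIV"
      using r by (simp add: jet1_eq tangent_set_Sjet0 det22_def J_eq_det)
    show ?thesis
      unfolding \<open>tangent_set (Sjet r) (jet1 f p) = UNIV\<close> setsum_def
    proof (intro set_eqI iffI UNIV_I)
      fix z :: jet1
      show "z \<in> {x + y |x y. x \<in> range (djet1 p) \<and> y \<in> UNIV}"
        by (intro CollectI exI[of _ "djet1 p 0"] exI[of _ "z - djet1 p 0"]) auto
    qed
  qed
qed

lemma finite_common_zeros_J_F1_F2:
  "finite {p. poly_xy PJ p = 0 \<and> poly_xy PF1 p = 0 \<and> poly_xy PF2 p = 0}"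
proof (rule finite_subset)
  show "{p. poly_xy PJ p = 0 \<and> poly_xy PF1 p = 0 \<and> poly_xy PF2 p = 0} \<subseteq>
     {p. poly_xy PJ p = 0 \<and> poly_xy PF1 p = 0 \<and> poly_xy (pjac PJ PF1) p \<noteq> 0} \<union>
     {p. poly_xy PJ p = 0 \<and> poly_xy PF2 p = 0 \<and> poly_xy (pjac PJ PF2) p \<noteq> 0}"
    using no_common_zero_poly by auto
qed (intro finite_UnI finite_nondegenerate_common_zeros)

theorem critical_points_fold_or_cusp:
  "one_generic f
    \<and> (\<forall>p. corank f p \<noteq> 0 \<longrightarrow> fold_point f p \<or> cusp_point f p)
    \<and> {p. cusp_point f p} = {p. Jdet f p = 0 \<and> F1 f p = 0 \<and> F2 f p = 0}
    \<and> finite {p. cusp_point f p}"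
proof -
  have cusp_iff: "cusp_point f p \<longleftrightarrow> poly_xy PJ p = 0 \<and> poly_xy PF1 p = 0 \<and> poly_xy PF2 p = 0"
    for p
  proof
    assume "cusp_point f p"
    then have "p \<in> Sr f 1" "tangent_set (Sr f 1) p = kerDf f p"
      unfolding cusp_point_def by blast+
    then show "poly_xy PJ p = 0 \<and> poly_xy PF1 p = 0 \<and> poly_xy PF2 p = 0"
      using tangent_set_S1_ne_kerDf unfolding S1_eq by blast
  qed (use cusp_pointI in blast)
  show ?thesis
    using one_generic cusp_pointI fold_pointI finite_common_zeros_J_F1_F2
    by (auto simp: cusp_iff corank_eq Jdet_eq F1_eq F2_eq)
qed

end

theorem mainTheorem3:
  fixes f :: "real \<times> real \<Rightarrow> real \<times> real"
  assumes poly: "poly2 (comp1 f)" "poly2 (comp2 f)"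
    and ideal: "\<exists>g1 g2 g3 g4 g5. poly2 g1 \<and> poly2 g2 \<and> poly2 g3 \<and> poly2 g4 \<and> poly2 g5 \<and>
        (\<forall>p. g1 p * Jdet f p + g2 p * F1 f p + g3 p * F2 f p
              + g4 p * jac (Jdet f) (F1 f) p + g5 p * jac (Jdet f) (F2 f) p = 1)"
  shows "one_generic f
    \<and> (\<forall>p. corank f p \<noteq> 0 \<longrightarrow> fold_point f p \<or> cusp_point f p)
    \<and> {p. cusp_point f p} = {p. Jdet f p = 0 \<and> F1 f p = 0 \<and> F2 f p = 0}
    \<and> finite {p. cusp_point f p}"
proof -
  obtain P1 P2 where P: "comp1 f = poly_xy P1" "comp2 f = poly_xy P2"
    using poly by (metis poly2_imp_poly_xy)
  obtain g1 g2 g3 g4 g5 where g: "\<And>p. g1 p * Jdet f p + g2 p * F1 f p + g3 p * F2 f p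
      + g4 p * jac (Jdet f) (F1 f) p + g5 p * jac (Jdet f) (F2 f) p = 1"
    using ideal by blast
  have "\<not> (Jdet f p = 0 \<and> F1 f p = 0 \<and> F2 f p = 0
      \<and> jac (Jdet f) (F1 f) p = 0 \<and> jac (Jdet f) (F2 f) p = 0)" for p
    using g[of p] by auto
  with P interpret polynomial_map_no_common_zero f P1 P2
    by unfold_locales
  show ?thesis by (rule critical_points_fold_or_cusp)
qed

end
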